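(* Let $f\colon[0,1]\times\mathbb R\to\mathbb R$ be continuous, and let $A,B\in\widehat{\Omega}[0,1]$ satisfy $\bigl|\int_0^1[A(s)-B(s)]\,ds\bigr|<1$. Then there exists $\lambda_0>0$ such that for every $\lambda\in\mathbb R$ with $|\lambda|\le\lambda_0$ the boundary value problem $x''(t)=-\lambda f(t,x(t))$, $t\in[0,1]$, $x(0)=\int_0^1A(s)\,dx(s)$, $x(1)=\int_0^1B(s)\,dx(s)$ has a solution.
   Context: Integrals in the boundary conditions are Riemann–Stieltjes integrals; a solution is a twice continuously differentiable $x\colon[0,1]\to\mathbb R$ satisfying the equation and the boundary conditions. For $\varepsilon>0$ and $a<b$, a bounded $A\colon[a,b]\to\mathbb R$ belongs to $\Omega_\varepsilon[a,b]$ if there exists $\delta>0$ such that $\sup_{t\le\tau\le\sigma\le s}|A(\sigma)-A(\tau)|\le\varepsilon$ whenever $t,s\in[a,b]$ and $0\le s-t\le\delta$. $\Omega[0,1]$ is the set of bounded $A\colon[0,1]\to\mathbb R$ such that for every $\varepsilon>0$ there is $a\in(0,1)$ with $A|_{[0,a]}\in\Omega_\varepsilon[0,a]$ and $A|_{[a,1]}$ of bounded (Jordan) variation on $[a,1]$. $\widehat{\Omega}[0,1]=\Omega[0,1]\cup C[0,1]\cup BV[0,1]$, where $BV[0,1]$ denotes functions of bounded variation on $[0,1]$. *)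

theory Defs
  imports "HOL-Analysis.Analysis"
begin

definition is_partition :: "real \<Rightarrow> real \<Rightarrow> nat \<Rightarrow> (nat \<Rightarrow> real) \<Rightarrow> bool" where
  "is_partition a b n t \<longleftrightarrow> t 0 = a \<and> t n = b \<and> (\<forall>i\<in>{1..n}. t (i - 1) < t i)"

definition bounded_variation_on :: "(real \<Rightarrow> real) \<Rightarrow> real \<Rightarrow> real \<Rightarrow> bool" where
  "bounded_variation_on A a b \<longleftrightarrow>
     (\<exists>M. \<forall>n t. is_partition a b n t \<longrightarrow>
        (\<Sum>i=1..n. \<bar>A (t i) - A (t (i - 1))\<bar>) \<le> M)"

definition has_RS_integral ::
  "(real \<Rightarrow> real) \<Rightarrow> (real \<Rightarrow> real) \<Rightarrow> real \<Rightarrow> real \<Rightarrow> real \<Rightarrow> bool" where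
  "has_RS_integral A g a b I \<longleftrightarrow>
     (\<forall>e>0. \<exists>d>0. \<forall>n t \<xi>. is_partition a b n t \<longrightarrow>
        (\<forall>i\<in>{1..n}. t i - t (i - 1) < d) \<longrightarrow>
        (\<forall>i\<in>{1..n}. t (i - 1) \<le> \<xi> i \<and> \<xi> i \<le> t i) \<longrightarrow>
        \<bar>(\<Sum>i=1..n. A (\<xi> i) * (g (t i) - g (t (i - 1)))) - I\<bar> < e)"

definition Omega_eps :: "real \<Rightarrow> real \<Rightarrow> real \<Rightarrow> (real \<Rightarrow> real) \<Rightarrow> bool" where
  "Omega_eps \<epsilon> a b A \<longleftrightarrow> bounded (A ` {a..b}) \<and>
     (\<exists>\<delta>>0. \<forall>t\<in>{a..b}. \<forall>s\<in>{a..b}. 0 \<le> s - t \<and> s - t \<le> \<delta> \<longrightarrow>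
        (\<forall>\<tau> \<sigma>. t \<le> \<tau> \<and> \<tau> \<le> \<sigma> \<and> \<sigma> \<le> s \<longrightarrow> \<bar>A \<sigma> - A \<tau>\<bar> \<le> \<epsilon>))"

definition Omega01 :: "(real \<Rightarrow> real) \<Rightarrow> bool" where
  "Omega01 A \<longleftrightarrow> bounded (A ` {0..1}) \<and>
     (\<forall>\<epsilon>>0. \<exists>a. 0 < a \<and> a < 1 \<and> Omega_eps \<epsilon> 0 a A \<and> bounded_variation_on A a 1)"

definition Omega_hat01 :: "(real \<Rightarrow> real) \<Rightarrow> bool" where
  "Omega_hat01 A \<longleftrightarrow> Omega01 A \<or> continuous_on {0..1} A \<or> bounded_variation_on A 0 1"

definition is_solution ::
  "(real \<Rightarrow> real \<Rightarrow> real) \<Rightarrow> real \<Rightarrow> (real \<Rightarrow> real) \<Rightarrow> (real \<Rightarrow> real) \<Rightarrow> (real \<Rightarrow> real) \<Rightarrow> bool" where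
  "is_solution f lam A B x \<longleftrightarrow>
     (\<exists>x' x''.
        (\<forall>t\<in>{0..1}. (x has_real_derivative x' t) (at t within {0..1})) \<and>
        (\<forall>t\<in>{0..1}. (x' has_real_derivative x'' t) (at t within {0..1})) \<and>
        continuous_on {0..1} x'' \<and>
        (\<forall>t\<in>{0..1}. x'' t = - lam * f t (x t))) \<and>
     has_RS_integral A x 0 1 (x 0) \<and>
     has_RS_integral B x 0 1 (x 1)"

end

(* Write a solution as x(t) = c + d t + lam * int_0^t w, with w(r) = - int_0^r f(s, x(s)) ds, so that
   x' = d + lam w. Every A in Omega-hat[0,1] is, up to any e > 0, a function of oscillation at most e plus a
   difference of monotone functions; this makes the Riemann-Stieltjes integral int_0^1 A dx equal to
   int_0^1 A x' ds. The boundary conditions then form a linear system for (c, d) whose determinant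
   1 + int A - int B is positive by hypothesis.
   For the nonlinear part, f is truncated in x to a bounded function. With the argument of f delayed by h,
   the integral equation is solved explicitly by the method of steps, continuously in (c, d); Brouwer's
   theorem on a square of side proportional to |lam| yields (c, d) solving the boundary system, and
   Arzela-Ascoli lets h tend to 0. For small |lam| the solution satisfies |x| <= 1, where the truncation
   does not change f. *)

theory Submission
  imports Defs "HOL-Complex_Analysis.Great_Picard"
begin

section \<open>Partitions and interval integrals\<close>

lemma mult_divide_add_one_less:
  fixes L e :: real
  assumes "0 \<le> L" "0 < e"
  shows "L * (e / (L + 1)) < e"
proof -
  have "L * (e / (L + 1)) = e * (L / (L + 1))" by simp
  also have "\<dots> < e * 1" using assms by (intro mult_strict_left_mono) auto
  finally show ?thesis by simp
qed

lemma is_partition_mono: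
  assumes "is_partition a b n t" "i \<le> j" "j \<le> n"
  shows "t i \<le> t j"
  using assms(2,3)
proof (induction j)
  case 0
  then show ?case by simp
next
  case (Suc j)
  have "t j < t (Suc j)"
    using assms(1) Suc.prems unfolding is_partition_def
    by (metis atLeastAtMost_iff diff_Suc_1 le_add1 plus_1_eq_Suc)
  then show ?case using Suc by (cases "i = Suc j") auto
qed

lemma is_partition_in:
  assumes "is_partition a b n t" "i \<le> n"
  shows "t i \<in> {a..b}"
  using is_partition_mono[OF assms(1), of 0 i] is_partition_mono[OF assms(1), of i n] assms
  unfolding is_partition_def by auto

lemma is_partition_less:
  assumes "is_partition a b n t" "i \<in> {1..n}"
  shows "t (i - 1) < t i"
  using assms unfolding is_partition_def by auto

lemma is_partition_subinterval:
  assumes "is_partition a b n t" "i \<in> {1..n}"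
  shows "{t (i - 1)..t i} \<subseteq> {a..b}"
  using is_partition_in[OF assms(1), of "i - 1"] is_partition_in[OF assms(1), of i] assms(2)
  by auto

lemma is_partition_snoc:
  assumes "is_partition a x n t" "x < y"
  shows "is_partition a y (Suc n) (t(Suc n := y))"
  using assms unfolding is_partition_def by (auto simp: le_Suc_eq)

lemma variation_sum_snoc:
  assumes "is_partition a x n t"
  shows "(\<Sum>i=1..Suc n. \<bar>A ((t(Suc n := y)) i) - A ((t(Suc n := y)) (i - 1))\<bar>)
      = (\<Sum>i=1..n. \<bar>A (t i) - A (t (i - 1))\<bar>) + \<bar>A y - A x\<bar>"
proof -
  have "(\<Sum>i=1..n. \<bar>A ((t(Suc n := y)) i) - A ((t(Suc n := y)) (i - 1))\<bar>)
     = (\<Sum>i=1..n. \<bar>A (t i) - A (t (i - 1))\<bar>)"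
    by (rule sum.cong) auto
  moreover have "t n = x" using assms unfolding is_partition_def by auto
  ultimately show ?thesis by (simp add: sum.cl_ivl_Suc)
qed

lemma sum_diff_pred_telescope:
  fixes u :: "nat \<Rightarrow> 'a::ab_group_add"
  shows "(\<Sum>i=1..n. u i - u (i - 1)) = u n - u 0"
  by (induction n) (auto simp: sum.cl_ivl_Suc)

lemma integral_is_partition_sum:
  fixes g :: "real \<Rightarrow> real"
  assumes P: "is_partition a b n t" and g: "g integrable_on {a..b}"
  shows "integral {a..b} g = (\<Sum>i=1..n. integral {t (i - 1)..t i} g)"
proof -
  have "integral {t 0..t m} g = (\<Sum>i=1..m. integral {t (i - 1)..t i} g)" if "m \<le> n" for m
    using that
  proof (induction m)
    case 0
    then show ?case by simp
  next
    case (Suc m)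
    have le: "t 0 \<le> t m" "t m \<le> t (Suc m)"
      using is_partition_mono[OF P] Suc.prems by auto
    have "{t 0..t (Suc m)} \<subseteq> {a..b}"
      using is_partition_in[OF P, of 0] is_partition_in[OF P, of "Suc m"] Suc.prems by auto
    then have "g integrable_on {t 0..t (Suc m)}"
      by (rule integrable_subinterval_real[OF g])
    then have "integral {t 0..t (Suc m)} g = integral {t 0..t m} g + integral {t m..t (Suc m)} g"
      using Henstock_Kurzweil_Integration.integral_combine[OF le] by metis
    then show ?case using Suc by simp
  qed
  from this[of n] show ?thesis using P unfolding is_partition_def by simp
qed

lemma abs_integral_le:
  fixes f :: "real \<Rightarrow> real"
  assumes "f integrable_on {a..b}" "a \<le> b" "\<And>x. x \<in> {a..b} \<Longrightarrow> \<bar>f x\<bar> \<le> B"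
  shows "\<bar>integral {a..b} f\<bar> \<le> B * (b - a)"
proof -
  have "0 \<le> B" using assms(2) assms(3)[of a] by auto
  then show ?thesis
    using has_integral_bound_real[OF _ finite.emptyI integrable_integral[OF assms(1)]] assms(3)
      content_real[OF assms(2)] by auto
qed

lemma abs_integral_diff_le:
  fixes g\<^sub>1 g\<^sub>2 :: "real \<Rightarrow> real"
  assumes "g\<^sub>1 integrable_on {a..b}" "g\<^sub>2 integrable_on {a..b}" "a \<le> b"
    and "\<And>s. s \<in> {a..b} \<Longrightarrow> \<bar>g\<^sub>1 s - g\<^sub>2 s\<bar> \<le> e"
  shows "\<bar>integral {a..b} g\<^sub>1 - integral {a..b} g\<^sub>2\<bar> \<le> e * (b - a)"
  using abs_integral_le[OF Henstock_Kurzweil_Integration.integrable_diff[OF assms(1,2)] assms(3,4)]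
    Henstock_Kurzweil_Integration.integral_diff[OF assms(1,2)] by simp

lemma integrable_bounded_times_continuous:
  fixes A g :: "real \<Rightarrow> real"
  assumes "bounded (A ` {a..b})" "A integrable_on {a..b}" "continuous_on {a..b} g"
  shows "(\<lambda>s. A s * g s) integrable_on {a..b}"
proof -
  have "(\<lambda>s. A s * g s) absolutely_integrable_on {a..b}"
    by (rule absolutely_integrable_bounded_measurable_product_real[OF
          integrable_imp_measurable[OF assms(2)] _ assms(1) absolutely_integrable_continuous_real[OF assms(3)]])
      simp
  then show ?thesis unfolding absolutely_integrable_on_def by blast
qed

section \<open>Bounded variation and the class \<open>\<Omega>\<close>-hat\<close>

definition variation_sums :: "(real \<Rightarrow> real) \<Rightarrow> real \<Rightarrow> real \<Rightarrow> real set" where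
  "variation_sums A a x = {(\<Sum>i=1..n. \<bar>A (t i) - A (t (i - 1))\<bar>) | n t. is_partition a x n t}"

definition variation :: "(real \<Rightarrow> real) \<Rightarrow> real \<Rightarrow> real \<Rightarrow> real" where
  "variation A a x = Sup (variation_sums A a x)"

lemma variation_sums_single:
  assumes "a < x"
  shows "\<bar>A x - A a\<bar> \<in> variation_sums A a x"
proof -
  have "is_partition a x 1 (\<lambda>i. if i = 0 then a else x)"
    using assms unfolding is_partition_def by auto
  then show ?thesis unfolding variation_sums_def by force
qed

lemma variation_sums_snoc:
  assumes "s \<in> variation_sums A a x" "x < y"
  shows "s + \<bar>A y - A x\<bar> \<in> variation_sums A a y"
proof -
  obtain n t where nt: "is_partition a x n t" "s = (\<Sum>i=1..n. \<bar>A (t i) - A (t (i - 1))\<bar>)"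
    using assms(1) unfolding variation_sums_def by auto
  show ?thesis
    unfolding variation_sums_def
    using is_partition_snoc[OF nt(1) assms(2)] variation_sum_snoc[OF nt(1), of A y] nt(2) by force
qed

lemma bdd_above_variation_sums:
  assumes "bounded_variation_on A a b" "x \<le> b"
  shows "bdd_above (variation_sums A a x)"
proof -
  obtain M where M: "\<And>s. s \<in> variation_sums A a b \<Longrightarrow> s \<le> M"
    using assms(1) unfolding bounded_variation_on_def variation_sums_def by blast
  show ?thesis
  proof (rule bdd_aboveI)
    fix s assume s: "s \<in> variation_sums A a x"
    show "s \<le> M"
    proof (cases "x = b")
      case False
      then have "s + \<bar>A b - A x\<bar> \<le> M"
        using M variation_sums_snoc[OF s] assms(2) by simp
      then show ?thesis by linarith
    qed (use s M in simp)
  qed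
qed

lemma variation_snoc_le:
  assumes "bounded_variation_on A a b" "a < x" "x < y" "y \<le> b"
  shows "variation A a x + \<bar>A y - A x\<bar> \<le> variation A a y"
proof -
  have "variation A a x \<le> variation A a y - \<bar>A y - A x\<bar>"
    unfolding variation_def
  proof (rule cSup_least)
    show "variation_sums A a x \<noteq> {}" using variation_sums_single[OF assms(2)] by blast
    fix s assume "s \<in> variation_sums A a x"
    then have "s + \<bar>A y - A x\<bar> \<le> Sup (variation_sums A a y)"
      using cSup_upper[OF variation_sums_snoc bdd_above_variation_sums[OF assms(1,4)]] assms(3) by blast
    then show "s \<le> Sup (variation_sums A a y) - \<bar>A y - A x\<bar>" by simp
  qed
  then show ?thesis by simp
qed

lemma abs_diff_le_variation:
  assumes "bounded_variation_on A a b" "a < y" "y \<le> b"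
  shows "\<bar>A y - A a\<bar> \<le> variation A a y"
  unfolding variation_def
  using cSup_upper[OF variation_sums_single bdd_above_variation_sums[OF assms(1,3)]] assms(2) .

lemma bounded_variation_on_increasing_majorant:
  assumes "bounded_variation_on A a b"
  obtains G where "\<And>x. x \<le> a \<Longrightarrow> G x = 0"
    and "\<And>x y. a \<le> x \<Longrightarrow> x \<le> y \<Longrightarrow> y \<le> b \<Longrightarrow> G x + \<bar>A y - A x\<bar> \<le> G y"
proof
  define G where "G x = (if x \<le> a then 0 else variation A a x)" for x
  show "G x = 0" if "x \<le> a" for x
    using that unfolding G_def by simp
  show "G x + \<bar>A y - A x\<bar> \<le> G y" if xy: "a \<le> x" "x \<le> y" "y \<le> b" for x y
  proof (cases "x = y")
    case False
    then have "x < y" using xy by simp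
    show ?thesis
    proof (cases "x = a")
      case True
      then show ?thesis
        using abs_diff_le_variation[OF assms _ \<open>y \<le> b\<close>] \<open>x < y\<close> unfolding G_def by simp
    next
      case False
      then show ?thesis
        using variation_snoc_le[OF assms _ \<open>x < y\<close> \<open>y \<le> b\<close>] xy unfolding G_def by simp
    qed
  qed simp
qed

lemma bounded_variation_on_monotone_parts:
  assumes "bounded_variation_on A a b" "lo \<le> a"
  obtains G where "mono_on {lo..b} G" "mono_on {lo..b} (\<lambda>x. G x - A (max a x))"
proof -
  obtain G where G0: "\<And>x. x \<le> a \<Longrightarrow> G x = 0"
    and G1: "\<And>x y. a \<le> x \<Longrightarrow> x \<le> y \<Longrightarrow> y \<le> b \<Longrightarrow> G x + \<bar>A y - A x\<bar> \<le> G y"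
    using bounded_variation_on_increasing_majorant[OF assms(1)] by blast
  have G_max: "G x = G (max a x)" for x
    using G0 by (cases "x \<le> a") (auto simp: max_def)
  have step: "G (max a x) + \<bar>A (max a y) - A (max a x)\<bar> \<le> G (max a y)"
    if "x \<le> y" "y \<in> {lo..b}" for x y
  proof (cases "a \<le> b")
    case True
    then show ?thesis using G1[of "max a x" "max a y"] that assms(2) by auto
  next
    case False
    then show ?thesis using that by (simp add: max_def)
  qed
  show ?thesis
  proof
    show "mono_on {lo..b} G"
    proof (rule mono_onI)
      fix x y assume "x \<in> {lo..b}" "y \<in> {lo..b}" "x \<le> y"
      then show "G x \<le> G y" using step[of x y] G_max[of x] G_max[of y] by auto
    qed
    show "mono_on {lo..b} (\<lambda>x. G x - A (max a x))"
    proof (rule mono_onI)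
      fix x y assume "x \<in> {lo..b}" "y \<in> {lo..b}" "x \<le> y"
      then show "G x - A (max a x) \<le> G y - A (max a y)"
        using step[of x y] G_max[of x] G_max[of y] abs_ge_self[of "A (max a y) - A (max a x)"]
        by auto
    qed
  qed
qed

lemma bounded_variation_on_imp_bounded:
  assumes "bounded_variation_on A a b"
  shows "bounded (A ` {a..b})"
proof -
  obtain G where G0: "\<And>x. x \<le> a \<Longrightarrow> G x = 0"
    and G1: "\<And>x y. a \<le> x \<Longrightarrow> x \<le> y \<Longrightarrow> y \<le> b \<Longrightarrow> G x + \<bar>A y - A x\<bar> \<le> G y"
    using bounded_variation_on_increasing_majorant[OF assms] by blast
  have "\<bar>A x\<bar> \<le> \<bar>A a\<bar> + G b" if "x \<in> {a..b}" for x
    using G1[of a x] G1[of x b] G0[of a] that by auto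
  then show ?thesis
    unfolding bounded_iff by (intro exI[of _ "\<bar>A a\<bar> + G b"]) auto
qed

text \<open>This property, shared by continuous functions, functions of bounded variation and the class
  \<open>\<Omega>[0,1]\<close>, is what makes Riemann--Stieltjes integrals against \<open>C\<^sup>1\<close> functions exist.\<close>

definition osc_bv_decomposable :: "(real \<Rightarrow> real) \<Rightarrow> real \<Rightarrow> real \<Rightarrow> bool" where
  "osc_bv_decomposable A a b \<longleftrightarrow> (\<forall>e>0. \<exists>A\<^sub>0 G H d. d > 0 \<and> mono_on {a..b} G \<and> mono_on {a..b} H \<and>
      (\<forall>s\<in>{a..b}. A s = A\<^sub>0 s + G s - H s) \<and>
      (\<forall>u\<in>{a..b}. \<forall>v\<in>{a..b}. \<bar>u - v\<bar> < d \<longrightarrow> \<bar>A\<^sub>0 u - A\<^sub>0 v\<bar> \<le> e))"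

lemma continuous_on_imp_osc_bv_decomposable:
  assumes "continuous_on {a..b} A"
  shows "osc_bv_decomposable A a b"
  unfolding osc_bv_decomposable_def
proof (intro allI impI)
  fix e :: real assume "e > 0"
  then obtain d where "d > 0"
    and d: "\<And>x x'. x \<in> {a..b} \<Longrightarrow> x' \<in> {a..b} \<Longrightarrow> dist x' x < d \<Longrightarrow> dist (A x') (A x) < e"
    using compact_uniformly_continuous[OF assms compact_Icc]
    unfolding uniformly_continuous_on_def by metis
  show "\<exists>A\<^sub>0 G H d. d > 0 \<and> mono_on {a..b} G \<and> mono_on {a..b} H \<and>
      (\<forall>s\<in>{a..b}. A s = A\<^sub>0 s + G s - H s) \<and>
      (\<forall>u\<in>{a..b}. \<forall>v\<in>{a..b}. \<bar>u - v\<bar> < d \<longrightarrow> \<bar>A\<^sub>0 u - A\<^sub>0 v\<bar> \<le> e)"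
    using \<open>d > 0\<close> d
    by (intro exI[of _ A] exI[of _ "\<lambda>_. 0"] exI[of _ d])
      (auto simp: mono_on_def dist_real_def less_imp_le)
qed

lemma bounded_variation_on_imp_osc_bv_decomposable:
  assumes "bounded_variation_on A a b"
  shows "osc_bv_decomposable A a b"
  unfolding osc_bv_decomposable_def
proof (intro allI impI)
  fix e :: real assume "e > 0"
  obtain G where "mono_on {a..b} G" "mono_on {a..b} (\<lambda>x. G x - A (max a x))"
    using bounded_variation_on_monotone_parts[OF assms order_refl] by metis
  then show "\<exists>A\<^sub>0 G H d. d > 0 \<and> mono_on {a..b} G \<and> mono_on {a..b} H \<and>
      (\<forall>s\<in>{a..b}. A s = A\<^sub>0 s + G s - H s) \<and>
      (\<forall>u\<in>{a..b}. \<forall>v\<in>{a..b}. \<bar>u - v\<bar> < d \<longrightarrow> \<bar>A\<^sub>0 u - A\<^sub>0 v\<bar> \<le> e)"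
    using \<open>e > 0\<close>
    by (intro exI[of _ "\<lambda>_. 0"] exI[of _ G] exI[of _ "\<lambda>x. G x - A (max a x)"] exI[of _ 1]) auto
qed

lemma Omega01_imp_osc_bv_decomposable:
  assumes "Omega01 A"
  shows "osc_bv_decomposable A 0 1"
  unfolding osc_bv_decomposable_def
proof (intro allI impI)
  fix e :: real assume "e > 0"
  then obtain a where a: "0 < a" "a < 1" "Omega_eps e 0 a A" "bounded_variation_on A a 1"
    using assms unfolding Omega01_def by blast
  then obtain \<delta> where "\<delta> > 0" and \<delta>: "\<And>t s. t \<in> {0..a} \<Longrightarrow> s \<in> {0..a} \<Longrightarrow> 0 \<le> s - t \<and> s - t \<le> \<delta> \<Longrightarrow>
        (\<forall>\<tau> \<sigma>. t \<le> \<tau> \<and> \<tau> \<le> \<sigma> \<and> \<sigma> \<le> s \<longrightarrow> \<bar>A \<sigma> - A \<tau>\<bar> \<le> e)"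
    unfolding Omega_eps_def by blast
  have osc_a: "\<bar>A p - A q\<bar> \<le> e" if "p \<in> {0..a}" "q \<in> {0..a}" "\<bar>p - q\<bar> \<le> \<delta>" for p q
  proof (cases "p \<le> q")
    case True
    then show ?thesis using \<delta>[of p q] that by (auto simp: abs_minus_commute)
  next
    case False
    then show ?thesis using \<delta>[of q p] that by auto
  qed
  obtain G where G: "mono_on {0..1} G" "mono_on {0..1} (\<lambda>x. G x - A (max a x))"
    using bounded_variation_on_monotone_parts[OF a(4) less_imp_le[OF a(1)]] by metis
  text \<open>\<open>A\<^sub>0\<close> follows \<open>A\<close> on \<open>[0, a]\<close>, where \<open>A\<close> oscillates little, and is frozen afterwards.\<close>
  define A\<^sub>0 where "A\<^sub>0 s = A (min s a) - A a" for s
  have "\<bar>A\<^sub>0 u - A\<^sub>0 v\<bar> \<le> e" if "u \<in> {0..1}" "v \<in> {0..1}" "\<bar>u - v\<bar> < \<delta>" for u v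
  proof -
    have "\<bar>min u a - min v a\<bar> \<le> \<bar>u - v\<bar>" by (auto simp: min_def)
    then show ?thesis
      using osc_a[of "min u a" "min v a"] that a(1) unfolding A\<^sub>0_def by simp
  qed
  then show "\<exists>A\<^sub>0 G H d. d > 0 \<and> mono_on {0..1} G \<and> mono_on {0..1} H \<and>
      (\<forall>s\<in>{0..1}. A s = A\<^sub>0 s + G s - H s) \<and>
      (\<forall>u\<in>{0..1}. \<forall>v\<in>{0..1}. \<bar>u - v\<bar> < d \<longrightarrow> \<bar>A\<^sub>0 u - A\<^sub>0 v\<bar> \<le> e)"
    using G \<open>\<delta> > 0\<close>
    by (intro exI[of _ A\<^sub>0] exI[of _ G] exI[of _ "\<lambda>x. G x - A (max a x)"] exI[of _ \<delta>])
      (auto simp: A\<^sub>0_def max_def min_def)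
qed

lemma Omega_hat01_imp_osc_bv_decomposable:
  "Omega_hat01 A \<Longrightarrow> osc_bv_decomposable A 0 1"
  unfolding Omega_hat01_def
  using continuous_on_imp_osc_bv_decomposable bounded_variation_on_imp_osc_bv_decomposable
    Omega01_imp_osc_bv_decomposable by blast

lemma Omega_hat01_imp_bounded:
  assumes "Omega_hat01 A"
  shows "bounded (A ` {0..1})"
proof -
  consider "Omega01 A" | "continuous_on {0..1} A" | "bounded_variation_on A 0 1"
    using assms unfolding Omega_hat01_def by blast
  then show ?thesis
  proof cases
    case 2
    then show ?thesis using compact_continuous_image compact_imp_bounded compact_Icc by blast
  qed (auto simp: Omega01_def bounded_variation_on_imp_bounded)
qed

lemma uniformly_approximable_by_integrable:
  fixes f :: "real \<Rightarrow> real"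
  assumes "d > 0" "e \<ge> 0"
    and osc: "\<And>u v. u \<in> {a..b} \<Longrightarrow> v \<in> {a..b} \<Longrightarrow> \<bar>u - v\<bar> < d \<Longrightarrow> \<bar>f u - f v\<bar> \<le> e"
  obtains g where "\<forall>x\<in>{a..b}. norm (f x - g x) \<le> e" "g integrable_on {a..b}"
proof -
  obtain p where p: "p tagged_division_of cbox a b" and fine: "(\<lambda>x. ball x d) fine p"
    using fine_division_exists[OF gauge_ball[OF \<open>d > 0\<close>], of a b] .
  have "\<forall>l\<in>snd ` p. \<exists>g. (\<forall>x\<in>l. norm (f x - g x) \<le> e) \<and> g integrable_on l"
  proof
    fix l assume "l \<in> snd ` p"
    then obtain x where xl: "(x, l) \<in> p" by force
    then obtain u v where l: "l = cbox u v" using p by blast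
    have "x \<in> l" "l \<subseteq> cbox a b" using xl p by auto
    show "\<exists>g. (\<forall>x\<in>l. norm (f x - g x) \<le> e) \<and> g integrable_on l"
    proof (intro exI[of _ "\<lambda>_. f x"] conjI ballI)
      show "(\<lambda>_. f x) integrable_on l" unfolding l by blast
    next
      fix y assume "y \<in> l"
      then have "\<bar>y - x\<bar> < d"
        using xl fine by (fastforce simp: dist_real_def abs_minus_commute)
      moreover have "x \<in> {a..b}" "y \<in> {a..b}"
        using \<open>x \<in> l\<close> \<open>y \<in> l\<close> \<open>l \<subseteq> cbox a b\<close> by auto
      ultimately show "norm (f y - f x) \<le> e"
        using osc[of y x] by simp
    qed
  qed
  from approximable_on_division[OF \<open>e \<ge> 0\<close> division_of_tagged_division[OF p] this]
  show ?thesis using that by (metis box_real(2))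
qed

lemma osc_bv_decomposable_integrable:
  assumes "osc_bv_decomposable A a b"
  shows "A integrable_on {a..b}"
proof -
  have "A integrable_on cbox a b"
  proof (rule integrable_uniform_limit)
    fix e :: real assume "e > 0"
    then obtain A\<^sub>0 G H d where "d > 0" and G: "mono_on {a..b} G" and H: "mono_on {a..b} H"
      and A: "\<forall>s\<in>{a..b}. A s = A\<^sub>0 s + G s - H s"
      and osc: "\<forall>u\<in>{a..b}. \<forall>v\<in>{a..b}. \<bar>u - v\<bar> < d \<longrightarrow> \<bar>A\<^sub>0 u - A\<^sub>0 v\<bar> \<le> e"
      using assms unfolding osc_bv_decomposable_def by blast
    obtain g where g: "\<forall>x\<in>{a..b}. norm (A\<^sub>0 x - g x) \<le> e" "g integrable_on {a..b}"
      using uniformly_approximable_by_integrable[of d e a b A\<^sub>0] \<open>d > 0\<close> \<open>e > 0\<close> osc by auto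
    have "(\<lambda>x. g x + G x - H x) integrable_on {a..b}"
      using g(2) integrable_on_mono_on[OF G] integrable_on_mono_on[OF H]
      by (intro Henstock_Kurzweil_Integration.integrable_diff Henstock_Kurzweil_Integration.integrable_add)
    moreover have "\<forall>x\<in>{a..b}. norm (A x - (g x + G x - H x)) \<le> e"
      using A g(1) by auto
    ultimately show "\<exists>g. (\<forall>x\<in>cbox a b. norm (A x - g x) \<le> e) \<and> g integrable_on cbox a b"
      by auto
  qed
  then show ?thesis by simp
qed

section \<open>Riemann--Stieltjes integrals against \<open>C\<^sup>1\<close> integrators\<close>

definition tagged_oscillation_vanishes :: "(real \<Rightarrow> real) \<Rightarrow> real \<Rightarrow> real \<Rightarrow> bool" where
  "tagged_oscillation_vanishes A a b \<longleftrightarrow> (\<forall>\<epsilon>>0. \<exists>\<delta>>0. \<forall>n t \<xi>. is_partition a b n t \<longrightarrow>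
      (\<forall>i\<in>{1..n}. t i - t (i - 1) < \<delta>) \<longrightarrow>
      (\<forall>i\<in>{1..n}. t (i - 1) \<le> \<xi> i \<and> \<xi> i \<le> t i) \<longrightarrow>
      (\<exists>w. (\<forall>i\<in>{1..n}. \<forall>s\<in>{t (i - 1)..t i}. \<bar>A (\<xi> i) - A s\<bar> \<le> w i) \<and>
           (\<Sum>i=1..n. w i * (t i - t (i - 1))) \<le> \<epsilon>))"

lemma mono_on_mesh_weighted_increments_le:
  assumes G: "mono_on {a..b} G" and P: "is_partition a b n t"
    and mesh: "\<forall>i\<in>{1..n}. t i - t (i - 1) \<le> \<delta>"
  shows "(\<Sum>i=1..n. (G (t i) - G (t (i - 1))) * (t i - t (i - 1))) \<le> \<delta> * (G b - G a)"
proof -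
  have "(\<Sum>i=1..n. (G (t i) - G (t (i - 1))) * (t i - t (i - 1)))
      \<le> (\<Sum>i=1..n. \<delta> * (G (t i) - G (t (i - 1))))"
  proof (rule sum_mono)
    fix i assume i: "i \<in> {1..n}"
    have "G (t (i - 1)) \<le> G (t i)"
      using mono_onD[OF G] is_partition_subinterval[OF P i] is_partition_less[OF P i] by auto
    then show "(G (t i) - G (t (i - 1))) * (t i - t (i - 1)) \<le> \<delta> * (G (t i) - G (t (i - 1)))"
      using mult_right_mono[of "t i - t (i - 1)" \<delta> "G (t i) - G (t (i - 1))"] mesh i
      by (simp add: mult.commute)
  qed
  also have "\<dots> = \<delta> * (G b - G a)"
    using P unfolding sum_distrib_left[symmetric] sum_diff_pred_telescope[of "\<lambda>i. G (t i)"]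
      is_partition_def by simp
  finally show ?thesis .
qed

lemma decomposition_tagged_oscillation_le:
  assumes G: "mono_on {a..b} G" and H: "mono_on {a..b} H"
    and A: "\<forall>s\<in>{a..b}. A s = A\<^sub>0 s + G s - H s"
    and osc: "\<forall>u\<in>{a..b}. \<forall>v\<in>{a..b}. \<bar>u - v\<bar> < \<delta> \<longrightarrow> \<bar>A\<^sub>0 u - A\<^sub>0 v\<bar> \<le> e"
    and P: "is_partition a b n t" and mesh: "\<forall>i\<in>{1..n}. t i - t (i - 1) < \<delta>"
    and tags: "\<forall>i\<in>{1..n}. t (i - 1) \<le> \<xi> i \<and> \<xi> i \<le> t i"
  obtains w where "\<forall>i\<in>{1..n}. \<forall>s\<in>{t (i - 1)..t i}. \<bar>A (\<xi> i) - A s\<bar> \<le> w i"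
    "(\<Sum>i=1..n. w i * (t i - t (i - 1))) \<le> e * (b - a) + \<delta> * ((G b - G a) + (H b - H a))"
proof
  define w where "w i = e + (G (t i) - G (t (i - 1))) + (H (t i) - H (t (i - 1)))" for i
  show "\<forall>i\<in>{1..n}. \<forall>s\<in>{t (i - 1)..t i}. \<bar>A (\<xi> i) - A s\<bar> \<le> w i"
  proof (intro ballI)
    fix i s assume i: "i \<in> {1..n}" and s: "s \<in> {t (i - 1)..t i}"
    have sub: "{t (i - 1)..t i} \<subseteq> {a..b}" by (rule is_partition_subinterval[OF P i])
    have \<xi>: "\<xi> i \<in> {t (i - 1)..t i}" using tags i by auto
    have "t i - t (i - 1) < \<delta>" using mesh i by blast
    then have "\<bar>\<xi> i - s\<bar> < \<delta>" using \<xi> s by auto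
    then have "\<bar>A\<^sub>0 (\<xi> i) - A\<^sub>0 s\<bar> \<le> e" using osc \<xi> s sub by blast
    moreover have "G (t (i - 1)) \<le> G u \<and> G u \<le> G (t i) \<and> H (t (i - 1)) \<le> H u \<and> H u \<le> H (t i)"
      if "u \<in> {t (i - 1)..t i}" for u
      using mono_onD[OF G] mono_onD[OF H] that sub by auto
    ultimately show "\<bar>A (\<xi> i) - A s\<bar> \<le> w i"
      using A \<xi> s sub unfolding w_def
      by (smt (verit, best) atLeastAtMost_iff subsetD)
  qed
  have mesh': "\<forall>i\<in>{1..n}. t i - t (i - 1) \<le> \<delta>" using mesh by auto
  have "(\<Sum>i=1..n. w i * (t i - t (i - 1)))
      = e * (\<Sum>i=1..n. t i - t (i - 1))
        + (\<Sum>i=1..n. (G (t i) - G (t (i - 1))) * (t i - t (i - 1)))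
        + (\<Sum>i=1..n. (H (t i) - H (t (i - 1))) * (t i - t (i - 1)))"
    unfolding w_def sum_distrib_left sum.distrib[symmetric] by (rule sum.cong) (auto simp: algebra_simps)
  also have "\<dots> \<le> e * (b - a) + \<delta> * (G b - G a) + \<delta> * (H b - H a)"
    using mono_on_mesh_weighted_increments_le[OF G P mesh']
      mono_on_mesh_weighted_increments_le[OF H P mesh'] P
    unfolding sum_diff_pred_telescope is_partition_def by simp
  finally show "(\<Sum>i=1..n. w i * (t i - t (i - 1))) \<le> e * (b - a) + \<delta> * ((G b - G a) + (H b - H a))"
    by (simp add: algebra_simps)
qed

lemma osc_bv_decomposable_imp_tagged_oscillation_vanishes:
  assumes "osc_bv_decomposable A a b"
  shows "tagged_oscillation_vanishes A a b"
  unfolding tagged_oscillation_vanishes_def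
proof (intro allI impI)
  fix \<epsilon> :: real assume "\<epsilon> > 0"
  define e where "e = \<epsilon> / (2 * (\<bar>b - a\<bar> + 1))"
  have "e > 0"
    using \<open>\<epsilon> > 0\<close> abs_ge_zero[of "b - a"] unfolding e_def
    by (intro divide_pos_pos mult_pos_pos) auto
  then obtain A\<^sub>0 G H d where "d > 0" and G: "mono_on {a..b} G" and H: "mono_on {a..b} H"
    and A: "\<forall>s\<in>{a..b}. A s = A\<^sub>0 s + G s - H s"
    and osc: "\<forall>u\<in>{a..b}. \<forall>v\<in>{a..b}. \<bar>u - v\<bar> < d \<longrightarrow> \<bar>A\<^sub>0 u - A\<^sub>0 v\<bar> \<le> e"
    using assms unfolding osc_bv_decomposable_def by blast
  define V where "V = (G b - G a) + (H b - H a)"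
  define \<delta> where "\<delta> = min d (\<epsilon> / (2 * (\<bar>V\<bar> + 1)))"
  have "\<delta> > 0" using \<open>d > 0\<close> \<open>\<epsilon> > 0\<close> unfolding \<delta>_def by simp
  have osc\<delta>: "\<forall>u\<in>{a..b}. \<forall>v\<in>{a..b}. \<bar>u - v\<bar> < \<delta> \<longrightarrow> \<bar>A\<^sub>0 u - A\<^sub>0 v\<bar> \<le> e"
    using osc unfolding \<delta>_def by auto
  have "\<delta> * V \<le> \<delta> * \<bar>V\<bar>"
    using \<open>\<delta> > 0\<close> by (intro mult_left_mono) auto
  also have "\<dots> \<le> \<epsilon> / (2 * (\<bar>V\<bar> + 1)) * \<bar>V\<bar>"
    unfolding \<delta>_def by (intro mult_right_mono) auto
  also have "\<dots> \<le> \<epsilon> / 2"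
    using \<open>\<epsilon> > 0\<close> by (simp add: field_simps)
  finally have \<delta>V: "\<delta> * V \<le> \<epsilon> / 2" .
  show "\<exists>\<delta>>0. \<forall>n t \<xi>. is_partition a b n t \<longrightarrow>
      (\<forall>i\<in>{1..n}. t i - t (i - 1) < \<delta>) \<longrightarrow>
      (\<forall>i\<in>{1..n}. t (i - 1) \<le> \<xi> i \<and> \<xi> i \<le> t i) \<longrightarrow>
      (\<exists>w. (\<forall>i\<in>{1..n}. \<forall>s\<in>{t (i - 1)..t i}. \<bar>A (\<xi> i) - A s\<bar> \<le> w i) \<and>
           (\<Sum>i=1..n. w i * (t i - t (i - 1))) \<le> \<epsilon>)"
  proof (intro exI[of _ \<delta>] conjI allI impI)
    fix n t \<xi>
    assume P: "is_partition a b n t" and mesh: "\<forall>i\<in>{1..n}. t i - t (i - 1) < \<delta>"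
      and tags: "\<forall>i\<in>{1..n}. t (i - 1) \<le> \<xi> i \<and> \<xi> i \<le> t i"
    obtain w where "\<forall>i\<in>{1..n}. \<forall>s\<in>{t (i - 1)..t i}. \<bar>A (\<xi> i) - A s\<bar> \<le> w i"
      and "(\<Sum>i=1..n. w i * (t i - t (i - 1))) \<le> e * (b - a) + \<delta> * V"
      using decomposition_tagged_oscillation_le[OF G H A osc\<delta> P mesh tags] unfolding V_def by blast
    moreover have "a \<le> b" using is_partition_mono[OF P, of 0 n] P unfolding is_partition_def by simp
    then have "e * (b - a) \<le> \<epsilon> / 2"
      using \<open>\<epsilon> > 0\<close> unfolding e_def by (simp add: field_simps)
    ultimately show "\<exists>w. (\<forall>i\<in>{1..n}. \<forall>s\<in>{t (i - 1)..t i}. \<bar>A (\<xi> i) - A s\<bar> \<le> w i) \<and>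
        (\<Sum>i=1..n. w i * (t i - t (i - 1))) \<le> \<epsilon>"
      using \<delta>V by fastforce
  qed (fact \<open>\<delta> > 0\<close>)
qed

lemma Omega_hat01_integrable: "Omega_hat01 A \<Longrightarrow> A integrable_on {0..1}"
  by (intro osc_bv_decomposable_integrable Omega_hat01_imp_osc_bv_decomposable)

lemma Omega_hat01_imp_tagged_oscillation_vanishes:
  "Omega_hat01 A \<Longrightarrow> tagged_oscillation_vanishes A 0 1"
  by (intro osc_bv_decomposable_imp_tagged_oscillation_vanishes Omega_hat01_imp_osc_bv_decomposable)

lemma abs_RS_term_le:
  fixes A x x' :: "real \<Rightarrow> real"
  assumes "u \<le> v"
    and x: "\<And>s. s \<in> {u..v} \<Longrightarrow> (x has_real_derivative x' s) (at s within {u..v})"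
    and Ax': "(\<lambda>s. A s * x' s) integrable_on {u..v}"
    and w: "\<And>s. s \<in> {u..v} \<Longrightarrow> \<bar>A \<xi> - A s\<bar> \<le> w"
    and K: "\<And>s. s \<in> {u..v} \<Longrightarrow> \<bar>x' s\<bar> \<le> K"
  shows "\<bar>A \<xi> * (x v - x u) - integral {u..v} (\<lambda>s. A s * x' s)\<bar> \<le> w * K * (v - u)"
proof -
  have ftc: "(x' has_integral (x v - x u)) {u..v}"
    by (rule fundamental_theorem_of_calculus[OF \<open>u \<le> v\<close>])
      (use x in \<open>auto simp: has_real_derivative_iff_has_vector_derivative\<close>)
  then have "((\<lambda>s. A \<xi> * x' s) has_integral A \<xi> * (x v - x u)) {u..v}"
    by (rule has_integral_mult_right)
  then have "A \<xi> * (x v - x u) - integral {u..v} (\<lambda>s. A s * x' s)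
      = integral {u..v} (\<lambda>s. A \<xi> * x' s) - integral {u..v} (\<lambda>s. A s * x' s)"
    by (simp add: integral_unique integral_unique[OF ftc])
  also have "\<bar>\<dots>\<bar> \<le> w * K * (v - u)"
  proof (rule abs_integral_diff_le[OF _ Ax' \<open>u \<le> v\<close>])
    show "(\<lambda>s. A \<xi> * x' s) integrable_on {u..v}"
      using \<open>((\<lambda>s. A \<xi> * x' s) has_integral _) _\<close> by blast
    fix s assume s: "s \<in> {u..v}"
    have "\<bar>A \<xi> * x' s - A s * x' s\<bar> = \<bar>A \<xi> - A s\<bar> * \<bar>x' s\<bar>"
      by (metis abs_mult left_diff_distrib)
    also have "\<dots> \<le> w * K"
      using w[OF s] K[OF s] by (intro mult_mono) auto
    finally show "\<bar>A \<xi> * x' s - A s * x' s\<bar> \<le> w * K" .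
  qed
  finally show ?thesis .
qed

lemma abs_RS_sum_diff_le:
  fixes A x x' :: "real \<Rightarrow> real"
  assumes P: "is_partition a b n t"
    and x: "\<And>t. t \<in> {a..b} \<Longrightarrow> (x has_real_derivative x' t) (at t within {a..b})"
    and Ax': "(\<lambda>s. A s * x' s) integrable_on {a..b}"
    and w: "\<forall>i\<in>{1..n}. \<forall>s\<in>{t (i - 1)..t i}. \<bar>A (\<xi> i) - A s\<bar> \<le> w i"
    and K: "\<And>s. s \<in> {a..b} \<Longrightarrow> \<bar>x' s\<bar> \<le> K"
  shows "\<bar>(\<Sum>i=1..n. A (\<xi> i) * (x (t i) - x (t (i - 1)))) - integral {a..b} (\<lambda>s. A s * x' s)\<bar>
    \<le> K * (\<Sum>i=1..n. w i * (t i - t (i - 1)))"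
proof -
  have term_le: "\<bar>A (\<xi> i) * (x (t i) - x (t (i - 1))) - integral {t (i - 1)..t i} (\<lambda>s. A s * x' s)\<bar>
      \<le> w i * K * (t i - t (i - 1))" if i: "i \<in> {1..n}" for i
  proof -
    have sub: "{t (i - 1)..t i} \<subseteq> {a..b}" by (rule is_partition_subinterval[OF P i])
    show ?thesis
    proof (rule abs_RS_term_le)
      show "t (i - 1) \<le> t i" using is_partition_less[OF P i] by simp
      show "(x has_real_derivative x' s) (at s within {t (i - 1)..t i})" if "s \<in> {t (i - 1)..t i}" for s
        using has_field_derivative_subset[OF x sub] that sub by blast
      show "(\<lambda>s. A s * x' s) integrable_on {t (i - 1)..t i}"
        by (rule integrable_subinterval_real[OF Ax' sub])
    qed (use w i K sub in auto)
  qed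
  have "\<bar>(\<Sum>i=1..n. A (\<xi> i) * (x (t i) - x (t (i - 1)))) - integral {a..b} (\<lambda>s. A s * x' s)\<bar>
      = \<bar>\<Sum>i=1..n. A (\<xi> i) * (x (t i) - x (t (i - 1))) - integral {t (i - 1)..t i} (\<lambda>s. A s * x' s)\<bar>"
    by (simp only: integral_is_partition_sum[OF P Ax'] sum_subtractf)
  also have "\<dots> \<le> (\<Sum>i=1..n. w i * K * (t i - t (i - 1)))"
    by (rule order_trans[OF sum_abs sum_mono]) (rule term_le)
  also have "\<dots> = K * (\<Sum>i=1..n. w i * (t i - t (i - 1)))"
    by (simp add: sum_distrib_left mult_ac)
  finally show ?thesis .
qed

lemma has_RS_integral_derivative:
  fixes A x x' :: "real \<Rightarrow> real"
  assumes A: "bounded (A ` {a..b})" "A integrable_on {a..b}" "tagged_oscillation_vanishes A a b"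
    and x: "\<And>t. t \<in> {a..b} \<Longrightarrow> (x has_real_derivative x' t) (at t within {a..b})"
    and x': "continuous_on {a..b} x'"
  shows "has_RS_integral A x a b (integral {a..b} (\<lambda>s. A s * x' s))"
  unfolding has_RS_integral_def
proof (intro allI impI)
  fix e :: real assume "e > 0"
  obtain K where "K > 0" "\<forall>y\<in>x' ` {a..b}. norm y \<le> K"
    using compact_imp_bounded[OF compact_continuous_image[OF x' compact_Icc]]
    unfolding bounded_pos by blast
  then have K: "\<And>s. s \<in> {a..b} \<Longrightarrow> \<bar>x' s\<bar> \<le> K" "K \<ge> 0" by auto
  define \<epsilon> where "\<epsilon> = e / (K + 1)"
  have "\<epsilon> > 0" using \<open>e > 0\<close> K(2) unfolding \<epsilon>_def by simp
  then obtain \<delta> where "\<delta> > 0" and osc: "\<forall>n t \<xi>. is_partition a b n t \<longrightarrow>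
      (\<forall>i\<in>{1..n}. t i - t (i - 1) < \<delta>) \<longrightarrow> (\<forall>i\<in>{1..n}. t (i - 1) \<le> \<xi> i \<and> \<xi> i \<le> t i) \<longrightarrow>
      (\<exists>w. (\<forall>i\<in>{1..n}. \<forall>s\<in>{t (i - 1)..t i}. \<bar>A (\<xi> i) - A s\<bar> \<le> w i) \<and>
           (\<Sum>i=1..n. w i * (t i - t (i - 1))) \<le> \<epsilon>)"
    using A(3) unfolding tagged_oscillation_vanishes_def by blast
  have Ax': "(\<lambda>s. A s * x' s) integrable_on {a..b}"
    by (rule integrable_bounded_times_continuous[OF A(1,2) x'])
  show "\<exists>d>0. \<forall>n t \<xi>. is_partition a b n t \<longrightarrow>
      (\<forall>i\<in>{1..n}. t i - t (i - 1) < d) \<longrightarrow>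
      (\<forall>i\<in>{1..n}. t (i - 1) \<le> \<xi> i \<and> \<xi> i \<le> t i) \<longrightarrow>
      \<bar>(\<Sum>i=1..n. A (\<xi> i) * (x (t i) - x (t (i - 1)))) - integral {a..b} (\<lambda>s. A s * x' s)\<bar> < e"
  proof (intro exI[of _ \<delta>] conjI allI impI)
    fix n t \<xi>
    assume P: "is_partition a b n t" and mesh: "\<forall>i\<in>{1..n}. t i - t (i - 1) < \<delta>"
      and tags: "\<forall>i\<in>{1..n}. t (i - 1) \<le> \<xi> i \<and> \<xi> i \<le> t i"
    obtain w where w: "\<forall>i\<in>{1..n}. \<forall>s\<in>{t (i - 1)..t i}. \<bar>A (\<xi> i) - A s\<bar> \<le> w i"
      and w_sum: "(\<Sum>i=1..n. w i * (t i - t (i - 1))) \<le> \<epsilon>"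
      using osc P mesh tags by blast
    have "\<bar>(\<Sum>i=1..n. A (\<xi> i) * (x (t i) - x (t (i - 1)))) - integral {a..b} (\<lambda>s. A s * x' s)\<bar>
        \<le> K * (\<Sum>i=1..n. w i * (t i - t (i - 1)))"
      by (rule abs_RS_sum_diff_le[OF P x Ax' w K(1)])
    also have "\<dots> \<le> K * \<epsilon>" using w_sum K(2) by (rule mult_left_mono)
    also have "\<dots> < e" unfolding \<epsilon>_def by (rule mult_divide_add_one_less[OF K(2) \<open>e > 0\<close>])
    finally show "\<bar>(\<Sum>i=1..n. A (\<xi> i) * (x (t i) - x (t (i - 1)))) - integral {a..b} (\<lambda>s. A s * x' s)\<bar> < e" .
  qed (fact \<open>\<delta> > 0\<close>)
qed

lemma abs_weighted_integral_diff_le: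
  fixes C g\<^sub>1 g\<^sub>2 :: "real \<Rightarrow> real"
  assumes C: "\<And>s. s \<in> {a..b} \<Longrightarrow> \<bar>C s\<bar> \<le> K" "C integrable_on {a..b}" and "a \<le> b"
    and g: "continuous_on {a..b} g\<^sub>1" "continuous_on {a..b} g\<^sub>2"
    and close: "\<And>s. s \<in> {a..b} \<Longrightarrow> \<bar>g\<^sub>1 s - g\<^sub>2 s\<bar> \<le> e"
  shows "\<bar>integral {a..b} (\<lambda>s. C s * g\<^sub>1 s) - integral {a..b} (\<lambda>s. C s * g\<^sub>2 s)\<bar> \<le> K * e * (b - a)"
proof (rule abs_integral_diff_le[OF _ _ \<open>a \<le> b\<close>])
  have "bounded (C ` {a..b})"
    unfolding bounded_iff using C(1) by (intro exI[of _ K]) auto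
  then show "(\<lambda>s. C s * g\<^sub>1 s) integrable_on {a..b}" "(\<lambda>s. C s * g\<^sub>2 s) integrable_on {a..b}"
    using integrable_bounded_times_continuous C(2) g by auto
  fix s assume s: "s \<in> {a..b}"
  have "\<bar>C s * g\<^sub>1 s - C s * g\<^sub>2 s\<bar> = \<bar>C s\<bar> * \<bar>g\<^sub>1 s - g\<^sub>2 s\<bar>"
    by (metis abs_mult right_diff_distrib)
  also have "\<dots> \<le> K * e"
    using C(1)[OF s] close[OF s] by (intro mult_mono) auto
  finally show "\<bar>C s * g\<^sub>1 s - C s * g\<^sub>2 s\<bar> \<le> K * e" .
qed

lemma tendsto_weighted_integral:
  fixes C g\<^sub>0 :: "real \<Rightarrow> real" and g :: "'a \<Rightarrow> real \<Rightarrow> real"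
  assumes C: "\<And>s. s \<in> {a..b} \<Longrightarrow> \<bar>C s\<bar> \<le> K" "C integrable_on {a..b}" and "a \<le> b"
    and g: "\<And>n. continuous_on {a..b} (g n)" "continuous_on {a..b} g\<^sub>0"
    and lim: "uniform_limit {a..b} g g\<^sub>0 \<F>"
  shows "((\<lambda>n. integral {a..b} (\<lambda>s. C s * g n s)) \<longlongrightarrow> integral {a..b} (\<lambda>s. C s * g\<^sub>0 s)) \<F>"
proof (rule tendstoI)
  fix e :: real assume "e > 0"
  have "K \<ge> 0" using C(1)[of a] \<open>a \<le> b\<close> by auto
  define L where "L = K * (b - a)"
  have "L \<ge> 0" using \<open>K \<ge> 0\<close> \<open>a \<le> b\<close> unfolding L_def by simp
  have "e / (L + 1) > 0" using \<open>e > 0\<close> \<open>L \<ge> 0\<close> by simp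
  with lim have "\<forall>\<^sub>F n in \<F>. \<forall>s\<in>{a..b}. dist (g n s) (g\<^sub>0 s) < e / (L + 1)"
    by (rule uniform_limitD)
  then show "\<forall>\<^sub>F n in \<F>. dist (integral {a..b} (\<lambda>s. C s * g n s)) (integral {a..b} (\<lambda>s. C s * g\<^sub>0 s)) < e"
  proof eventually_elim
    case (elim n)
    have "\<bar>integral {a..b} (\<lambda>s. C s * g n s) - integral {a..b} (\<lambda>s. C s * g\<^sub>0 s)\<bar>
        \<le> K * (e / (L + 1)) * (b - a)"
      using elim by (intro abs_weighted_integral_diff_le[OF C \<open>a \<le> b\<close> g])
        (auto simp: dist_real_def intro!: less_imp_le)
    also have "\<dots> = L * (e / (L + 1))" unfolding L_def by simp
    also have "\<dots> < e" using mult_divide_add_one_less[OF \<open>L \<ge> 0\<close> \<open>e > 0\<close>] .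
    finally show ?case by (simp add: dist_real_def)
  qed
qed

section \<open>Integral equations with delay\<close>

definition delay :: "real \<Rightarrow> (real \<Rightarrow> real) \<Rightarrow> real \<Rightarrow> real" where
  "delay h y s = y (max 0 (s - h))"

lemma continuous_on_delay:
  assumes "h \<ge> 0" "continuous_on {0..1} y"
  shows "continuous_on {0..1} (delay h y)"
  unfolding delay_def
  by (rule continuous_on_compose2[OF assms(2)]) (use assms(1) in \<open>auto intro!: continuous_intros\<close>)

lemma delay_cong:
  assumes "0 \<le> a" "s \<le> a + h" "\<And>u. u \<in> {0..a} \<Longrightarrow> y\<^sub>1 u = y\<^sub>2 u"
  shows "delay h y\<^sub>1 s = delay h y\<^sub>2 s"
  unfolding delay_def using assms by simp

lemma uniform_limit_delay:
  assumes "h \<ge> 0" "uniform_limit {0..1} y y\<^sub>0 \<F>"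
  shows "uniform_limit {0..1} (\<lambda>n. delay h (y n)) (delay h y\<^sub>0) \<F>"
proof (rule uniform_limitI)
  fix e :: real assume "e > 0"
  with assms(2) have "\<forall>\<^sub>F n in \<F>. \<forall>s\<in>{0..1}. dist (y n s) (y\<^sub>0 s) < e"
    by (rule uniform_limitD)
  then show "\<forall>\<^sub>F n in \<F>. \<forall>s\<in>{0..1}. dist (delay h (y n) s) (delay h y\<^sub>0 s) < e"
    by eventually_elim (use assms(1) in \<open>auto simp: delay_def\<close>)
qed

lemma uniform_limit_delay_vanishing:
  assumes h: "\<And>n. h n \<ge> 0" "(h \<longlongrightarrow> 0) \<F>"
    and y\<^sub>0: "continuous_on {0..1} y\<^sub>0" and lim: "uniform_limit {0..1} y y\<^sub>0 \<F>"
  shows "uniform_limit {0..1} (\<lambda>n. delay (h n) (y n)) y\<^sub>0 \<F>"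
proof (rule uniform_limitI)
  fix e :: real assume "e > 0"
  then have "e / 2 > 0" by simp
  then obtain \<delta> where "\<delta> > 0"
    and \<delta>: "\<forall>s\<in>{0..1}. \<forall>s'\<in>{0..1}. dist s' s < \<delta> \<longrightarrow> dist (y\<^sub>0 s') (y\<^sub>0 s) < e / 2"
    using compact_uniformly_continuous[OF y\<^sub>0 compact_Icc]
    unfolding uniformly_continuous_on_def by blast
  have "\<forall>\<^sub>F n in \<F>. h n < \<delta>"
    using order_tendstoD(2)[OF h(2) \<open>\<delta> > 0\<close>] .
  moreover have "\<forall>\<^sub>F n in \<F>. \<forall>s\<in>{0..1}. dist (y n s) (y\<^sub>0 s) < e / 2"
    using uniform_limitD[OF lim \<open>e / 2 > 0\<close>] .
  ultimately show "\<forall>\<^sub>F n in \<F>. \<forall>s\<in>{0..1}. dist (delay (h n) (y n) s) (y\<^sub>0 s) < e"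
  proof eventually_elim
    case (elim n)
    show ?case
    proof
      fix s :: real assume s: "s \<in> {0..1}"
      define \<sigma> where "\<sigma> = max 0 (s - h n)"
      have "\<sigma> \<in> {0..1}" "dist \<sigma> s < \<delta>"
        using s elim h(1)[of n] unfolding \<sigma>_def dist_real_def by auto
      then have "dist (y n \<sigma>) (y\<^sub>0 \<sigma>) < e / 2" "dist (y\<^sub>0 \<sigma>) (y\<^sub>0 s) < e / 2"
        using elim \<delta> s by auto
      then show "dist (delay (h n) (y n) s) (y\<^sub>0 s) < e"
        unfolding delay_def \<sigma>_def[symmetric] using dist_triangle[of "y n \<sigma>" "y\<^sub>0 s" "y\<^sub>0 \<sigma>"] by linarith
    qed
  qed
qed

locale bounded_rhs =
  fixes F :: "real \<Rightarrow> real \<Rightarrow> real" and M :: real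
  assumes continuous_along: "\<And>y. continuous_on {0..1} y \<Longrightarrow> continuous_on {0..1} (\<lambda>s. F s (y s))"
    and abs_bounded: "\<And>s u. s \<in> {0..1} \<Longrightarrow> \<bar>F s u\<bar> \<le> M"
    and equicontinuous:
      "\<And>e. e > 0 \<Longrightarrow> \<exists>\<eta>>0. \<forall>s\<in>{0..1}. \<forall>u v. \<bar>u - v\<bar> < \<eta> \<longrightarrow> \<bar>F s u - F s v\<bar> < e"
begin

lemma bound_nonneg: "M \<ge> 0"
  using abs_bounded[of 0 0] by auto

definition drift :: "(real \<Rightarrow> real) \<Rightarrow> real \<Rightarrow> real" where
  "drift y r = - integral {0..r} (\<lambda>s. F s (y s))"

lemma drift_0 [simp]: "drift y 0 = 0"
  unfolding drift_def by simp

lemma drift_cong: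
  assumes "\<And>s. s \<in> {0..r} \<Longrightarrow> y\<^sub>1 s = y\<^sub>2 s"
  shows "drift y\<^sub>1 r = drift y\<^sub>2 r"
  unfolding drift_def using integral_cong[of "{0..r}" "\<lambda>s. F s (y\<^sub>1 s)" "\<lambda>s. F s (y\<^sub>2 s)"] assms
  by simp

lemma has_real_derivative_drift:
  assumes "continuous_on {0..1} y" "t \<in> {0..1}"
  shows "(drift y has_real_derivative - F t (y t)) (at t within {0..1})"
  unfolding drift_def[abs_def]
  by (intro DERIV_minus integral_has_real_derivative continuous_along assms)

lemma continuous_on_drift:
  assumes "continuous_on {0..1} y"
  shows "continuous_on {0..1} (drift y)"
  unfolding continuous_on_eq_continuous_within
  using has_real_derivative_drift[OF assms] by (blast intro: DERIV_continuous)

lemma abs_drift_le: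
  assumes "continuous_on {0..1} y" "r \<in> {0..1}"
  shows "\<bar>drift y r\<bar> \<le> M"
proof -
  have "norm (drift y r - drift y 0) \<le> M * norm (r - 0)"
    by (rule field_differentiable_bound[where S="{0..1}"])
      (use has_real_derivative_drift[OF assms(1)] abs_bounded assms(2) in auto)
  also have "\<dots> \<le> M"
    using assms(2) bound_nonneg by (simp add: mult_left_le)
  finally show ?thesis by simp
qed

lemma abs_drift_diff_le:
  assumes "continuous_on {0..1} y\<^sub>1" "continuous_on {0..1} y\<^sub>2"
    and "\<And>s. s \<in> {0..1} \<Longrightarrow> \<bar>F s (y\<^sub>1 s) - F s (y\<^sub>2 s)\<bar> \<le> e" and "r \<in> {0..1}"
  shows "\<bar>drift y\<^sub>1 r - drift y\<^sub>2 r\<bar> \<le> e"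
proof -
  have "e \<ge> 0" using assms(3)[of 0] by auto
  have int: "(\<lambda>s. F s (y\<^sub>i s)) integrable_on {0..r}" if "continuous_on {0..1} y\<^sub>i" for y\<^sub>i
    using integrable_subinterval_real[OF integrable_continuous_real[OF continuous_along[OF that]]] assms(4)
    by auto
  have "\<bar>integral {0..r} (\<lambda>s. F s (y\<^sub>1 s)) - integral {0..r} (\<lambda>s. F s (y\<^sub>2 s))\<bar> \<le> e * (r - 0)"
    by (rule abs_integral_diff_le[OF int int]) (use assms in auto)
  also have "\<dots> \<le> e"
    using assms(4) \<open>e \<ge> 0\<close> by (simp add: mult_left_le)
  finally show ?thesis
    unfolding drift_def by (simp add: abs_minus_commute)
qed

lemma uniform_limit_drift:
  assumes "\<And>n. continuous_on {0..1} (y n)" "continuous_on {0..1} y\<^sub>0"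
    and lim: "uniform_limit {0..1} y y\<^sub>0 \<F>"
  shows "uniform_limit {0..1} (\<lambda>n. drift (y n)) (drift y\<^sub>0) \<F>"
proof (rule uniform_limitI)
  fix e :: real assume "e > 0"
  then obtain \<eta> where "\<eta> > 0" and \<eta>: "\<forall>s\<in>{0..1}. \<forall>u v. \<bar>u - v\<bar> < \<eta> \<longrightarrow> \<bar>F s u - F s v\<bar> < e / 2"
    using equicontinuous[of "e / 2"] by auto
  have "\<forall>\<^sub>F n in \<F>. \<forall>s\<in>{0..1}. dist (y n s) (y\<^sub>0 s) < \<eta>"
    using uniform_limitD[OF lim \<open>\<eta> > 0\<close>] .
  then show "\<forall>\<^sub>F n in \<F>. \<forall>r\<in>{0..1}. dist (drift (y n) r) (drift y\<^sub>0 r) < e"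
  proof eventually_elim
    case (elim n)
    have "\<bar>F s (y n s) - F s (y\<^sub>0 s)\<bar> \<le> e / 2" if "s \<in> {0..1}" for s
    proof -
      have "\<bar>y n s - y\<^sub>0 s\<bar> < \<eta>" using elim that by (simp add: dist_real_def)
      then show ?thesis using \<eta> that by (simp add: less_imp_le)
    qed
    then have close: "\<bar>drift (y n) r - drift y\<^sub>0 r\<bar> \<le> e / 2" if "r \<in> {0..1}" for r
      using abs_drift_diff_le[OF assms(1,2) _ that] by blast
    show ?case
    proof
      fix r :: real assume "r \<in> {0..1}"
      then show "dist (drift (y n) r) (drift y\<^sub>0 r) < e"
        using close[of r] \<open>e > 0\<close> unfolding dist_real_def by linarith
    qed
  qed
qed

definition picard :: "real \<Rightarrow> real \<Rightarrow> real \<Rightarrow> (real \<Rightarrow> real) \<Rightarrow> real \<Rightarrow> real" where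
  "picard lam c d y t = c + d * t + lam * integral {0..t} (drift y)"

lemma picard_0 [simp]: "picard lam c d y 0 = c"
  unfolding picard_def by simp

lemma picard_cong:
  assumes "\<And>s. s \<in> {0..t} \<Longrightarrow> y\<^sub>1 s = y\<^sub>2 s"
  shows "picard lam c d y\<^sub>1 t = picard lam c d y\<^sub>2 t"
proof -
  have "drift y\<^sub>1 r = drift y\<^sub>2 r" if "r \<in> {0..t}" for r
    using assms that by (intro drift_cong) auto
  then show ?thesis
    unfolding picard_def using integral_cong[of "{0..t}" "drift y\<^sub>1" "drift y\<^sub>2"] by simp
qed

lemma has_real_derivative_picard:
  assumes "continuous_on {0..1} y" "t \<in> {0..1}"
  shows "(picard lam c d y has_real_derivative d + lam * drift y t) (at t within {0..1})"
proof -
  have "((\<lambda>t. c + d * t + lam * integral {0..t} (drift y)) has_real_derivative 0 + d + lam * drift y t)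
      (at t within {0..1})"
    by (intro DERIV_add DERIV_const DERIV_cmult_Id DERIV_cmult integral_has_real_derivative
        continuous_on_drift assms)
  then show ?thesis unfolding picard_def[abs_def] by simp
qed

lemma continuous_on_picard:
  assumes "continuous_on {0..1} y"
  shows "continuous_on {0..1} (picard lam c d y)"
  unfolding continuous_on_eq_continuous_within
  using has_real_derivative_picard[OF assms] by (blast intro: DERIV_continuous)

lemma abs_picard_diff_le:
  assumes "continuous_on {0..1} y" "t \<in> {0..1}" "t' \<in> {0..1}"
  shows "\<bar>picard lam c d y t - picard lam c d y t'\<bar> \<le> (\<bar>d\<bar> + \<bar>lam\<bar> * M) * \<bar>t - t'\<bar>"
proof -
  have "\<bar>d + lam * drift y s\<bar> \<le> \<bar>d\<bar> + \<bar>lam\<bar> * M" if "s \<in> {0..1}" for s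
  proof -
    have "\<bar>lam * drift y s\<bar> \<le> \<bar>lam\<bar> * M"
      using abs_drift_le[OF assms(1) that] by (simp add: abs_mult mult_left_mono)
    then show ?thesis using abs_triangle_ineq[of d "lam * drift y s"] by linarith
  qed
  then show ?thesis
    using field_differentiable_bound[where S="{0..1}", OF _ has_real_derivative_picard[OF assms(1)]]
      assms(2,3) by auto
qed

lemma abs_picard_le:
  assumes "continuous_on {0..1} y" "t \<in> {0..1}"
  shows "\<bar>picard lam c d y t\<bar> \<le> \<bar>c\<bar> + \<bar>d\<bar> + \<bar>lam\<bar> * M"
proof -
  have "\<bar>picard lam c d y t - picard lam c d y 0\<bar> \<le> (\<bar>d\<bar> + \<bar>lam\<bar> * M) * \<bar>t - 0\<bar>"
    using abs_picard_diff_le[OF assms(1,2), where t'=0] by simp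
  also have "\<dots> \<le> \<bar>d\<bar> + \<bar>lam\<bar> * M"
    using assms(2) bound_nonneg by (simp add: mult_left_le)
  finally show ?thesis by simp
qed

lemma abs_picard_diff_params_le:
  assumes "continuous_on {0..1} y\<^sub>1" "continuous_on {0..1} y\<^sub>2"
    and "\<And>r. r \<in> {0..1} \<Longrightarrow> \<bar>drift y\<^sub>1 r - drift y\<^sub>2 r\<bar> \<le> e" and "t \<in> {0..1}"
  shows "\<bar>picard lam c\<^sub>1 d\<^sub>1 y\<^sub>1 t - picard lam c\<^sub>2 d\<^sub>2 y\<^sub>2 t\<bar> \<le> \<bar>c\<^sub>1 - c\<^sub>2\<bar> + \<bar>d\<^sub>1 - d\<^sub>2\<bar> + \<bar>lam\<bar> * e"
proof -
  have "e \<ge> 0" using assms(3)[of 0] by auto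
  have int: "drift y integrable_on {0..t}" if "continuous_on {0..1} y" for y
    using integrable_subinterval_real[OF integrable_continuous_real[OF continuous_on_drift[OF that]]]
      assms(4) by auto
  have "\<bar>integral {0..t} (drift y\<^sub>1) - integral {0..t} (drift y\<^sub>2)\<bar> \<le> e * (t - 0)"
    using assms(3,4) by (intro abs_integral_diff_le[OF int[OF assms(1)] int[OF assms(2)]]) auto
  also have "\<dots> \<le> e"
    using assms(4) \<open>e \<ge> 0\<close> by (simp add: mult_left_le)
  finally have I: "\<bar>integral {0..t} (drift y\<^sub>1) - integral {0..t} (drift y\<^sub>2)\<bar> \<le> e" .
  have "\<bar>(d\<^sub>1 - d\<^sub>2) * t\<bar> \<le> \<bar>d\<^sub>1 - d\<^sub>2\<bar>"
    using assms(4) by (simp add: abs_mult mult_left_le)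
  moreover have "\<bar>lam * (integral {0..t} (drift y\<^sub>1) - integral {0..t} (drift y\<^sub>2))\<bar> \<le> \<bar>lam\<bar> * e"
    using I by (simp add: abs_mult mult_left_mono)
  moreover have "picard lam c\<^sub>1 d\<^sub>1 y\<^sub>1 t - picard lam c\<^sub>2 d\<^sub>2 y\<^sub>2 t
      = (c\<^sub>1 - c\<^sub>2) + (d\<^sub>1 - d\<^sub>2) * t + lam * (integral {0..t} (drift y\<^sub>1) - integral {0..t} (drift y\<^sub>2))"
    unfolding picard_def by (simp add: algebra_simps)
  ultimately show ?thesis by linarith
qed

lemma uniform_limit_picard:
  assumes c: "(c \<longlongrightarrow> c\<^sub>0) \<F>" and d: "(d \<longlongrightarrow> d\<^sub>0) \<F>"
    and y: "\<And>n. continuous_on {0..1} (y n)" "continuous_on {0..1} y\<^sub>0"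
    and lim: "uniform_limit {0..1} y y\<^sub>0 \<F>"
  shows "uniform_limit {0..1} (\<lambda>n. picard lam (c n) (d n) (y n)) (picard lam c\<^sub>0 d\<^sub>0 y\<^sub>0) \<F>"
proof (rule uniform_limitI)
  fix e :: real assume "e > 0"
  define e' where "e' = e / 3"
  have "e' > 0" using \<open>e > 0\<close> unfolding e'_def by simp
  have "\<forall>\<^sub>F n in \<F>. dist (c n) c\<^sub>0 < e'" "\<forall>\<^sub>F n in \<F>. dist (d n) d\<^sub>0 < e'"
    using tendstoD[OF c \<open>e' > 0\<close>] tendstoD[OF d \<open>e' > 0\<close>] .
  moreover have "\<forall>\<^sub>F n in \<F>. \<forall>r\<in>{0..1}. dist (drift (y n) r) (drift y\<^sub>0 r) < e' / (\<bar>lam\<bar> + 1)"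
    using uniform_limitD[OF uniform_limit_drift[OF y lim]] \<open>e' > 0\<close> by simp
  ultimately show "\<forall>\<^sub>F n in \<F>. \<forall>t\<in>{0..1}.
      dist (picard lam (c n) (d n) (y n) t) (picard lam c\<^sub>0 d\<^sub>0 y\<^sub>0 t) < e"
  proof eventually_elim
    case (elim n)
    show ?case
    proof
      fix t :: real assume "t \<in> {0..1}"
      have "\<bar>picard lam (c n) (d n) (y n) t - picard lam c\<^sub>0 d\<^sub>0 y\<^sub>0 t\<bar>
          \<le> \<bar>c n - c\<^sub>0\<bar> + \<bar>d n - d\<^sub>0\<bar> + \<bar>lam\<bar> * (e' / (\<bar>lam\<bar> + 1))"
        using elim by (intro abs_picard_diff_params_le y \<open>t \<in> {0..1}\<close>)
          (auto simp: dist_real_def intro!: less_imp_le)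
      also have "\<dots> < e"
        using elim[unfolded dist_real_def] mult_divide_add_one_less[of "\<bar>lam\<bar>" e'] \<open>e' > 0\<close>
        unfolding e'_def by linarith
      finally show "dist (picard lam (c n) (d n) (y n) t) (picard lam c\<^sub>0 d\<^sub>0 y\<^sub>0 t) < e"
        by (simp add: dist_real_def)
    qed
  qed
qed

text \<open>The method of steps: because of the delay, each iteration makes the function correct on a
  further interval of length \<open>h\<close>, so after \<open>n\<close> steps with \<open>n h \<ge> 1\<close> the delayed integral equation
  holds on all of \<open>[0,1]\<close>.\<close>

definition delayed_iterate :: "real \<Rightarrow> real \<Rightarrow> real \<Rightarrow> real \<Rightarrow> nat \<Rightarrow> real \<Rightarrow> real" where
  "delayed_iterate lam h c d n = ((\<lambda>y. picard lam c d (delay h y)) ^^ n) (\<lambda>_. c)"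

lemma delayed_iterate_0: "delayed_iterate lam h c d 0 = (\<lambda>_. c)"
  unfolding delayed_iterate_def by simp

lemma delayed_iterate_Suc:
  "delayed_iterate lam h c d (Suc n) = picard lam c d (delay h (delayed_iterate lam h c d n))"
  unfolding delayed_iterate_def by simp

lemma continuous_on_delayed_iterate:
  assumes "h \<ge> 0"
  shows "continuous_on {0..1} (delayed_iterate lam h c d n)"
  by (induction n)
    (auto simp: delayed_iterate_0 delayed_iterate_Suc intro!: continuous_on_picard continuous_on_delay assms)

lemma delayed_iterate_Suc_eq:
  assumes "h \<ge> 0" "t \<in> {0..real n * h}"
  shows "delayed_iterate lam h c d (Suc n) t = delayed_iterate lam h c d n t"
  using assms(2)
proof (induction n arbitrary: t)
  case 0
  then show ?case by (simp add: delayed_iterate_0 delayed_iterate_Suc)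
next
  case (Suc n)
  have "delay h (delayed_iterate lam h c d (Suc n)) s = delay h (delayed_iterate lam h c d n) s"
    if "s \<in> {0..t}" for s
    using Suc that assms(1) by (intro delay_cong[of "real n * h"]) (auto simp: algebra_simps)
  then show ?case
    by (subst (1 2) delayed_iterate_Suc) (rule picard_cong)
qed

lemma delayed_iterate_fixed_point:
  assumes "1 \<le> real n * h" "t \<in> {0..1}"
  shows "picard lam c d (delay h (delayed_iterate lam h c d n)) t = delayed_iterate lam h c d n t"
proof -
  have "h \<ge> 0"
  proof (rule ccontr)
    assume "\<not> h \<ge> 0"
    then have "real n * h \<le> 0" by (simp add: mult_nonneg_nonpos)
    then show False using assms(1) by simp
  qed
  then show ?thesis
    using delayed_iterate_Suc_eq[of h t n] assms by (simp add: delayed_iterate_Suc)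
qed

lemma uniform_limit_delayed_iterate:
  assumes "h \<ge> 0" and c: "(c \<longlongrightarrow> c\<^sub>0) \<F>" and d: "(d \<longlongrightarrow> d\<^sub>0) \<F>"
  shows "uniform_limit {0..1} (\<lambda>k. delayed_iterate lam h (c k) (d k) n) (delayed_iterate lam h c\<^sub>0 d\<^sub>0 n) \<F>"
proof (induction n)
  case 0
  show ?case
  proof (rule uniform_limitI)
    fix e :: real assume "e > 0"
    then show "\<forall>\<^sub>F k in \<F>. \<forall>t\<in>{0..1}.
        dist (delayed_iterate lam h (c k) (d k) 0 t) (delayed_iterate lam h c\<^sub>0 d\<^sub>0 0 t) < e"
      using tendstoD[OF c] by (simp add: delayed_iterate_0)
  qed
next
  case (Suc n)
  show ?case
    unfolding delayed_iterate_Suc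
    by (rule uniform_limit_picard[OF c d _ _ uniform_limit_delay[OF \<open>h \<ge> 0\<close> Suc.IH]])
      (auto intro: continuous_on_delay continuous_on_delayed_iterate \<open>h \<ge> 0\<close>)
qed

end

section \<open>The boundary value problem\<close>

lemma Arzela_Ascoli_lipschitz:
  fixes x :: "nat \<Rightarrow> 'a::euclidean_space \<Rightarrow> 'b::{real_normed_vector,heine_borel}"
  assumes "compact S" "\<And>n s. s \<in> S \<Longrightarrow> norm (x n s) \<le> B"
    and lip: "\<And>n s t. s \<in> S \<Longrightarrow> t \<in> S \<Longrightarrow> dist (x n s) (x n t) \<le> L * dist s t"
  obtains g k where "continuous_on S g" "strict_mono k" "uniform_limit S (x \<circ> k) g sequentially"
proof -
  have equicont: "\<exists>d. 0 < d \<and> (\<forall>n t. t \<in> S \<and> norm (s - t) < d \<longrightarrow> norm (x n s - x n t) < e)"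
    if "s \<in> S" "0 < e" for s e
  proof (intro exI[of _ "e / (\<bar>L\<bar> + 1)"] conjI allI impI)
    show "0 < e / (\<bar>L\<bar> + 1)" using \<open>0 < e\<close> by simp
    fix n t assume t: "t \<in> S \<and> norm (s - t) < e / (\<bar>L\<bar> + 1)"
    have "norm (x n s - x n t) \<le> L * norm (s - t)"
      using lip[of s t n] \<open>s \<in> S\<close> t by (simp add: dist_norm)
    also have "\<dots> \<le> \<bar>L\<bar> * (e / (\<bar>L\<bar> + 1))"
      using t by (intro mult_mono) auto
    also have "\<dots> < e"
      using mult_divide_add_one_less \<open>0 < e\<close> by simp
    finally show "norm (x n s - x n t) < e" .
  qed
  obtain g and k :: "nat \<Rightarrow> nat" where "continuous_on S g" "strict_mono k"
    and conv: "\<And>e. 0 < e \<Longrightarrow> \<exists>N. \<forall>n s. n \<ge> N \<and> s \<in> S \<longrightarrow> norm (x (k n) s - g s) < e"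
    using Arzela_Ascoli[OF assms(1,2) equicont] by blast
  moreover have "uniform_limit S (x \<circ> k) g sequentially"
    unfolding uniform_limit_sequentially_iff dist_norm o_def using conv by blast
  ultimately show ?thesis using that by blast
qed

lemma Arzela_Ascoli_lipschitz_parameters:
  fixes x :: "nat \<Rightarrow> 'a::euclidean_space \<Rightarrow> 'b::{real_normed_vector,heine_borel}"
    and p :: "nat \<Rightarrow> 'c::metric_space"
  assumes "compact K" "\<And>n. p n \<in> K"
    and "compact S" "\<And>n s. s \<in> S \<Longrightarrow> norm (x n s) \<le> B"
    and "\<And>n s t. s \<in> S \<Longrightarrow> t \<in> S \<Longrightarrow> dist (x n s) (x n t) \<le> L * dist s t"
  obtains r q g where "strict_mono r" "q \<in> K" "(p \<circ> r) \<longlonglongrightarrow> q"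
    "continuous_on S g" "uniform_limit S (x \<circ> r) g sequentially"
proof -
  obtain q r\<^sub>1 where "q \<in> K" "strict_mono r\<^sub>1" "(p \<circ> r\<^sub>1) \<longlonglongrightarrow> q"
    using compact_imp_seq_compact[OF assms(1)] seq_compactE assms(2) by metis
  moreover obtain g r\<^sub>2 where "continuous_on S g" "strict_mono r\<^sub>2"
    "uniform_limit S (x \<circ> r\<^sub>1 \<circ> r\<^sub>2) g sequentially"
  proof (rule Arzela_Ascoli_lipschitz[where x="x \<circ> r\<^sub>1"])
    show "norm ((x \<circ> r\<^sub>1) n s) \<le> B" if "s \<in> S" for n s
      using assms(4)[OF that] by simp
    show "dist ((x \<circ> r\<^sub>1) n s) ((x \<circ> r\<^sub>1) n t) \<le> L * dist s t" if "s \<in> S" "t \<in> S" for n s t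
      using assms(5)[OF that] by simp
  qed (rule assms(3), rule that)
  moreover have "(p \<circ> (r\<^sub>1 \<circ> r\<^sub>2)) \<longlonglongrightarrow> q"
    unfolding o_assoc by (rule LIMSEQ_subseq_LIMSEQ[OF \<open>(p \<circ> r\<^sub>1) \<longlonglongrightarrow> q\<close> \<open>strict_mono r\<^sub>2\<close>])
  ultimately show ?thesis
    using that[of "r\<^sub>1 \<circ> r\<^sub>2" q g] strict_mono_o[OF \<open>strict_mono r\<^sub>1\<close> \<open>strict_mono r\<^sub>2\<close>]
    by (simp add: o_assoc)
qed

lemma is_solution_cong:
  assumes "\<And>t. t \<in> {0..1} \<Longrightarrow> f t (x t) = g t (x t)"
  shows "is_solution f lam A B x \<longleftrightarrow> is_solution g lam A B x"
  unfolding is_solution_def using assms by simp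

definition clamp :: "real \<Rightarrow> real \<Rightarrow> real" where
  "clamp R y = max (-R) (min R y)"

lemma clamp_in: "clamp R y \<in> {-\<bar>R\<bar>..\<bar>R\<bar>}"
  unfolding clamp_def by auto

lemma abs_clamp_diff_le: "\<bar>clamp R u - clamp R v\<bar> \<le> \<bar>u - v\<bar>"
  unfolding clamp_def by auto

lemma clamp_eq_self: "\<bar>y\<bar> \<le> R \<Longrightarrow> clamp R y = y"
  unfolding clamp_def by auto

lemma continuous_on_clamp: "continuous_on S y \<Longrightarrow> continuous_on S (\<lambda>s. clamp R (y s))"
  unfolding clamp_def by (intro continuous_intros)

lemma bounded_rhs_truncation:
  fixes f :: "real \<Rightarrow> real \<Rightarrow> real"
  assumes "continuous_on ({0..1} \<times> UNIV) (\<lambda>(t, y). f t y)"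
  obtains M where "bounded_rhs (\<lambda>t y. f t (clamp R y)) M"
proof -
  define K where "K = {0..1::real} \<times> {-\<bar>R\<bar>..\<bar>R\<bar>}"
  have "compact K" unfolding K_def by (intro compact_Times compact_Icc)
  have in_K: "(s, clamp R u) \<in> K" if "s \<in> {0..1}" for s u
    using that clamp_in unfolding K_def by auto
  have f: "continuous_on K (\<lambda>(t, y). f t y)"
    by (rule continuous_on_subset[OF assms]) (auto simp: K_def)
  obtain M where M: "\<And>t y. (t, y) \<in> K \<Longrightarrow> \<bar>f t y\<bar> \<le> M"
    using compact_imp_bounded[OF compact_continuous_image[OF f \<open>compact K\<close>]]
    unfolding bounded_iff by fastforce
  have "bounded_rhs (\<lambda>t y. f t (clamp R y)) M"
  proof
    fix y :: "real \<Rightarrow> real" assume "continuous_on {0..1} y"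
    then have "continuous_on {0..1} ((\<lambda>(t, y). f t y) \<circ> (\<lambda>s. (s, clamp R (y s))))"
      by (intro continuous_on_compose continuous_on_subset[OF f] continuous_intros continuous_on_clamp)
        (auto intro: in_K)
    then show "continuous_on {0..1} (\<lambda>s. f s (clamp R (y s)))"
      by (simp add: o_def)
  next
    fix s u :: real assume "s \<in> {0..1}"
    then show "\<bar>f s (clamp R u)\<bar> \<le> M" by (intro M in_K)
  next
    fix e :: real assume "e > 0"
    then obtain \<eta> where "\<eta> > 0"
      and \<eta>: "\<forall>p\<in>K. \<forall>p'\<in>K. dist p' p < \<eta> \<longrightarrow> dist ((\<lambda>(t, y). f t y) p') ((\<lambda>(t, y). f t y) p) < e"
      using compact_uniformly_continuous[OF f \<open>compact K\<close>]
      unfolding uniformly_continuous_on_def by blast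
    show "\<exists>\<eta>>0. \<forall>s\<in>{0..1}. \<forall>u v. \<bar>u - v\<bar> < \<eta> \<longrightarrow> \<bar>f s (clamp R u) - f s (clamp R v)\<bar> < e"
    proof (intro exI[of _ \<eta>] conjI ballI allI impI)
      fix s u v :: real assume "s \<in> {0..1}" "\<bar>u - v\<bar> < \<eta>"
      then have "dist (s, clamp R u) (s, clamp R v) < \<eta>"
        using abs_clamp_diff_le[of R u v] by (simp add: dist_Pair_Pair dist_real_def)
      then show "\<bar>f s (clamp R u) - f s (clamp R v)\<bar> < e"
        using \<eta> in_K[OF \<open>s \<in> {0..1}\<close>] by (fastforce simp: dist_real_def)
    qed (fact \<open>\<eta> > 0\<close>)
  qed
  then show ?thesis by (rule that)
qed

locale bvp = bounded_rhs +
  fixes A B :: "real \<Rightarrow> real" and M\<^sub>A M\<^sub>B :: real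
  assumes A_bound: "\<And>s. s \<in> {0..1} \<Longrightarrow> \<bar>A s\<bar> \<le> M\<^sub>A"
    and B_bound: "\<And>s. s \<in> {0..1} \<Longrightarrow> \<bar>B s\<bar> \<le> M\<^sub>B"
    and A_integrable: "A integrable_on {0..1}"
    and B_integrable: "B integrable_on {0..1}"
    and det_pos: "0 < 1 + integral {0..1} A - integral {0..1} B"
begin

definition bc_det :: real where
  "bc_det = 1 + integral {0..1} A - integral {0..1} B"

text \<open>For \<open>x = picard lam c d g\<close> and \<open>w = drift g\<close> one has \<open>x 0 = c\<close>, \<open>x 1 = c + d + lam \<integral>w\<close> and
  \<open>x' = d + lam w\<close>. The boundary conditions \<open>x 0 = \<integral>A x'\<close>, \<open>x 1 = \<integral>B x'\<close> are then a linear system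
  for \<open>(c, d)\<close> with determinant \<open>bc_det\<close>, whose solution is:\<close>

definition bc_map :: "real \<Rightarrow> (real \<Rightarrow> real) \<Rightarrow> real \<times> real" where
  "bc_map lam w =
    (let d = lam * (integral {0..1} (\<lambda>s. B s * w s) - integral {0..1} (\<lambda>s. A s * w s)
                    - integral {0..1} w) / bc_det
     in (integral {0..1} A * d + lam * integral {0..1} (\<lambda>s. A s * w s), d))"

definition bc_bound :: real where
  "bc_bound = (1 + M\<^sub>A) * ((M\<^sub>A + M\<^sub>B + 1) * M / bc_det) + M\<^sub>A * M"

lemma bc_det_pos: "bc_det > 0"
  using det_pos unfolding bc_det_def .

lemma M\<^sub>A_nonneg: "M\<^sub>A \<ge> 0"
  using A_bound[of 0] by auto

lemma M\<^sub>B_nonneg: "M\<^sub>B \<ge> 0"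
  using B_bound[of 0] by auto

lemma bc_bound_nonneg: "bc_bound \<ge> 0"
  unfolding bc_bound_def using M\<^sub>A_nonneg M\<^sub>B_nonneg bound_nonneg bc_det_pos by simp

lemma A_bounded: "bounded (A ` {0..1})"
  unfolding bounded_iff using A_bound by (intro exI[of _ M\<^sub>A]) auto

lemma B_bounded: "bounded (B ` {0..1})"
  unfolding bounded_iff using B_bound by (intro exI[of _ M\<^sub>B]) auto

lemma abs_weighted_integral_le:
  fixes C w :: "real \<Rightarrow> real"
  assumes "\<And>s. s \<in> {0..1} \<Longrightarrow> \<bar>C s\<bar> \<le> K" "C integrable_on {0..1}"
    and "continuous_on {0..1} w" "\<And>r. r \<in> {0..1} \<Longrightarrow> \<bar>w r\<bar> \<le> M"
  shows "\<bar>integral {0..1} (\<lambda>s. C s * w s)\<bar> \<le> K * M"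
proof -
  have "\<bar>integral {0..1} (\<lambda>s. C s * w s) - integral {0..1} (\<lambda>s. C s * 0)\<bar> \<le> K * M * (1 - 0)"
    by (rule abs_weighted_integral_diff_le) (use assms in auto)
  then show ?thesis by simp
qed

lemma bc_map_bound:
  assumes "continuous_on {0..1} w" "\<And>r. r \<in> {0..1} \<Longrightarrow> \<bar>w r\<bar> \<le> M"
  shows "\<bar>fst (bc_map lam w)\<bar> \<le> \<bar>lam\<bar> * bc_bound" "\<bar>snd (bc_map lam w)\<bar> \<le> \<bar>lam\<bar> * bc_bound"
proof -
  define P Q W where "P = integral {0..1} (\<lambda>s. A s * w s)" and "Q = integral {0..1} (\<lambda>s. B s * w s)"
    and "W = integral {0..1} w"
  define d where "d = lam * (Q - P - W) / bc_det"
  define K where "K = (M\<^sub>A + M\<^sub>B + 1) * M / bc_det"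
  have P: "\<bar>P\<bar> \<le> M\<^sub>A * M" and Q: "\<bar>Q\<bar> \<le> M\<^sub>B * M" and W: "\<bar>W\<bar> \<le> 1 * M"
    unfolding P_def Q_def W_def
    using abs_weighted_integral_le[OF A_bound A_integrable assms]
      abs_weighted_integral_le[OF B_bound B_integrable assms]
      abs_weighted_integral_le[of "\<lambda>_. 1" 1, OF _ _ assms] by auto
  have "\<bar>Q - P - W\<bar> \<le> (M\<^sub>A + M\<^sub>B + 1) * M"
    using P Q W by (simp add: abs_le_iff distrib_right)
  then have "\<bar>lam\<bar> * \<bar>Q - P - W\<bar> \<le> \<bar>lam\<bar> * ((M\<^sub>A + M\<^sub>B + 1) * M)"
    by (simp add: mult_left_mono)
  then have d: "\<bar>d\<bar> \<le> \<bar>lam\<bar> * K"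
    unfolding d_def K_def using bc_det_pos by (simp add: abs_mult abs_divide divide_right_mono)
  have "K \<ge> 0"
    unfolding K_def using M\<^sub>A_nonneg M\<^sub>B_nonneg bound_nonneg bc_det_pos by simp
  have bc_bound: "bc_bound = (1 + M\<^sub>A) * K + M\<^sub>A * M"
    unfolding bc_bound_def K_def ..
  have "0 \<le> M\<^sub>A * K" "0 \<le> M\<^sub>A * M"
    using M\<^sub>A_nonneg \<open>K \<ge> 0\<close> bound_nonneg by simp_all
  have "\<bar>integral {0..1} A\<bar> \<le> M\<^sub>A"
    using abs_integral_le[OF A_integrable _ A_bound] by simp
  then have "\<bar>integral {0..1} A * d\<bar> \<le> M\<^sub>A * (\<bar>lam\<bar> * K)"
    using d M\<^sub>A_nonneg by (simp add: abs_mult mult_mono)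
  moreover have "\<bar>lam * P\<bar> \<le> \<bar>lam\<bar> * (M\<^sub>A * M)"
    using P by (simp add: abs_mult mult_left_mono)
  ultimately have "\<bar>integral {0..1} A * d + lam * P\<bar> \<le> \<bar>lam\<bar> * (M\<^sub>A * K + M\<^sub>A * M)"
    using abs_triangle_ineq[of "integral {0..1} A * d" "lam * P"] by (simp add: algebra_simps)
  also have "\<dots> \<le> \<bar>lam\<bar> * bc_bound"
    unfolding bc_bound using \<open>K \<ge> 0\<close> by (intro mult_left_mono) (auto simp: algebra_simps)
  finally have c: "\<bar>integral {0..1} A * d + lam * P\<bar> \<le> \<bar>lam\<bar> * bc_bound" .
  have "\<bar>lam\<bar> * K \<le> \<bar>lam\<bar> * bc_bound"
    unfolding bc_bound using \<open>0 \<le> M\<^sub>A * K\<close> \<open>0 \<le> M\<^sub>A * M\<close>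
    by (intro mult_left_mono) (auto simp: algebra_simps)
  with d show "\<bar>snd (bc_map lam w)\<bar> \<le> \<bar>lam\<bar> * bc_bound"
    unfolding bc_map_def P_def Q_def W_def d_def Let_def by simp
  from c show "\<bar>fst (bc_map lam w)\<bar> \<le> \<bar>lam\<bar> * bc_bound"
    unfolding bc_map_def P_def Q_def W_def d_def Let_def by simp
qed

lemma tendsto_bc_map:
  assumes "\<And>n. continuous_on {0..1} (w n)" "continuous_on {0..1} w\<^sub>0" "uniform_limit {0..1} w w\<^sub>0 \<F>"
  shows "((\<lambda>n. bc_map lam (w n)) \<longlongrightarrow> bc_map lam w\<^sub>0) \<F>"
proof -
  have weighted: "((\<lambda>n. integral {0..1} (\<lambda>s. C s * w n s)) \<longlongrightarrow> integral {0..1} (\<lambda>s. C s * w\<^sub>0 s)) \<F>"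
    if "\<And>s. s \<in> {0..1} \<Longrightarrow> \<bar>C s\<bar> \<le> K" "C integrable_on {0..1}" for C :: "real \<Rightarrow> real" and K
    by (rule tendsto_weighted_integral[OF that zero_le_one assms])
  have "((\<lambda>n. integral {0..1} (\<lambda>s. 1 * w n s)) \<longlongrightarrow> integral {0..1} (\<lambda>s. 1 * w\<^sub>0 s)) \<F>"
    by (rule weighted[where K=1]) auto
  then have "((\<lambda>n. integral {0..1} (w n)) \<longlongrightarrow> integral {0..1} w\<^sub>0) \<F>"
    by simp
  then show ?thesis
    unfolding bc_map_def Let_def
    by (intro tendsto_intros weighted[OF A_bound A_integrable] weighted[OF B_bound B_integrable])
      (use bc_det_pos in auto)
qed

lemma bc_map_boundary_conditions:
  assumes "bc_map lam w = (c, d)" "continuous_on {0..1} w"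
  shows "integral {0..1} (\<lambda>s. A s * (d + lam * w s)) = c"
    and "integral {0..1} (\<lambda>s. B s * (d + lam * w s)) = c + d + lam * integral {0..1} w"
proof -
  have linear: "integral {0..1} (\<lambda>s. C s * (d + lam * w s))
      = d * integral {0..1} C + lam * integral {0..1} (\<lambda>s. C s * w s)"
    if "bounded (C ` {0..1})" "C integrable_on {0..1}" for C :: "real \<Rightarrow> real"
  proof -
    have "(\<lambda>s. C s * w s) integrable_on {0..1}"
      by (rule integrable_bounded_times_continuous[OF that assms(2)])
    then have "integral {0..1} (\<lambda>s. d * C s + lam * (C s * w s))
        = integral {0..1} (\<lambda>s. d * C s) + integral {0..1} (\<lambda>s. lam * (C s * w s))"
      using that(2) by (intro Henstock_Kurzweil_Integration.integral_add integrable_on_mult_right)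
    then show ?thesis by (simp add: algebra_simps)
  qed
  define P Q W where "P = integral {0..1} (\<lambda>s. A s * w s)" and "Q = integral {0..1} (\<lambda>s. B s * w s)"
    and "W = integral {0..1} w"
  have c: "c = integral {0..1} A * d + lam * P" and d: "d * bc_det = lam * (Q - P - W)"
    using assms(1) bc_det_pos unfolding bc_map_def Let_def P_def Q_def W_def by auto
  show "integral {0..1} (\<lambda>s. A s * (d + lam * w s)) = c"
    unfolding linear[OF A_bounded A_integrable] c P_def by simp
  have "d + d * integral {0..1} A - d * integral {0..1} B = lam * Q - lam * P - lam * W"
    using d unfolding bc_det_def by (simp add: algebra_simps)
  then show "integral {0..1} (\<lambda>s. B s * (d + lam * w s)) = c + d + lam * integral {0..1} w"
    unfolding linear[OF B_bounded B_integrable] c P_def Q_def W_def by (simp add: algebra_simps)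
qed

lemma delayed_bc_fixed_point:
  assumes "h \<ge> 0"
  obtains c d where "\<bar>c\<bar> \<le> \<bar>lam\<bar> * bc_bound" "\<bar>d\<bar> \<le> \<bar>lam\<bar> * bc_bound"
    "bc_map lam (drift (delay h (delayed_iterate lam h c d n))) = (c, d)"
proof -
  define \<Psi> where "\<Psi> p = bc_map lam (drift (delay h (delayed_iterate lam h (fst p) (snd p) n)))" for p
  define \<rho> where "\<rho> = \<bar>lam\<bar> * bc_bound"
  define S where "S = {-\<rho>..\<rho>} \<times> {-\<rho>..\<rho>}"
  have cont: "continuous_on {0..1} (delay h (delayed_iterate lam h c d n))" for c d
    by (intro continuous_on_delay continuous_on_delayed_iterate assms)
  have "continuous_on S \<Psi>"
    unfolding continuous_on_def
  proof
    fix p assume "p \<in> S"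
    have "uniform_limit {0..1} (\<lambda>q. delayed_iterate lam h (fst q) (snd q) n)
        (delayed_iterate lam h (fst p) (snd p) n) (at p within S)"
      by (intro uniform_limit_delayed_iterate assms tendsto_fst tendsto_snd tendsto_ident_at)
    then have "uniform_limit {0..1} (\<lambda>q. drift (delay h (delayed_iterate lam h (fst q) (snd q) n)))
        (drift (delay h (delayed_iterate lam h (fst p) (snd p) n))) (at p within S)"
      by (intro uniform_limit_drift cont uniform_limit_delay assms)
    then show "(\<Psi> \<longlongrightarrow> \<Psi> p) (at p within S)"
      unfolding \<Psi>_def by (rule tendsto_bc_map[OF continuous_on_drift[OF cont] continuous_on_drift[OF cont]])
  qed
  moreover have "\<Psi> \<in> S \<rightarrow> S"
  proof
    fix p
    have "\<bar>fst (\<Psi> p)\<bar> \<le> \<rho>" "\<bar>snd (\<Psi> p)\<bar> \<le> \<rho>"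
      unfolding \<Psi>_def \<rho>_def
      by (intro bc_map_bound continuous_on_drift abs_drift_le cont; simp)+
    then show "\<Psi> p \<in> S"
      unfolding S_def mem_Times_iff atLeastAtMost_iff abs_le_iff by linarith
  qed
  moreover have "compact S" "convex S" "S \<noteq> {}"
    unfolding S_def \<rho>_def using bc_bound_nonneg by (auto intro!: compact_Times convex_Times)
  ultimately obtain p where "p \<in> S" "\<Psi> p = p"
    using brouwer by metis
  moreover from \<open>p \<in> S\<close> have "\<bar>fst p\<bar> \<le> \<rho>" "\<bar>snd p\<bar> \<le> \<rho>"
    unfolding S_def mem_Times_iff atLeastAtMost_iff abs_le_iff by linarith+
  ultimately show ?thesis
    using that[of "fst p" "snd p"] unfolding \<Psi>_def \<rho>_def by simp
qed

lemma limit_of_delayed_bc_solutions: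
  assumes h: "\<And>k. h k \<ge> 0" "h \<longlonglongrightarrow> 0" and p: "p \<longlonglongrightarrow> (c, d)"
    and x: "\<And>k. continuous_on {0..1} (x k)" "continuous_on {0..1} g"
      "uniform_limit {0..1} x g sequentially"
    and fixed: "\<And>k t. t \<in> {0..1} \<Longrightarrow> picard lam (fst (p k)) (snd (p k)) (delay (h k) (x k)) t = x k t"
    and bc: "\<And>k. bc_map lam (drift (delay (h k) (x k))) = p k"
  shows "\<And>t. t \<in> {0..1} \<Longrightarrow> picard lam c d g t = g t" and "bc_map lam (drift g) = (c, d)"
proof -
  have y: "continuous_on {0..1} (delay (h k) (x k))" for k
    by (intro continuous_on_delay h x)
  have y_lim: "uniform_limit {0..1} (\<lambda>k. delay (h k) (x k)) g sequentially"
    by (rule uniform_limit_delay_vanishing[OF h x(2,3)])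
  have picard_lim: "uniform_limit {0..1} (\<lambda>k. picard lam (fst (p k)) (snd (p k)) (delay (h k) (x k)))
      (picard lam c d g) sequentially"
    using uniform_limit_picard[OF tendsto_fst[OF p] tendsto_snd[OF p] y x(2) y_lim] by simp
  show "picard lam c d g t = g t" if "t \<in> {0..1}" for t
  proof (rule LIMSEQ_unique)
    show "(\<lambda>k. x k t) \<longlonglongrightarrow> picard lam c d g t"
      using tendsto_uniform_limitI[OF picard_lim that] fixed[OF that] by simp
    show "(\<lambda>k. x k t) \<longlonglongrightarrow> g t"
      by (rule tendsto_uniform_limitI[OF x(3) that])
  qed
  have "(\<lambda>k. bc_map lam (drift (delay (h k) (x k)))) \<longlonglongrightarrow> bc_map lam (drift g)"
    by (intro tendsto_bc_map uniform_limit_drift continuous_on_drift y x(2) y_lim)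
  with p show "bc_map lam (drift g) = (c, d)"
    unfolding bc by (rule LIMSEQ_unique[rotated])
qed

lemma delayed_bc_solution_sequence:
  obtains h p x where "\<And>k. h k \<ge> 0" "h \<longlonglongrightarrow> 0"
    "\<And>k. \<bar>fst (p k)\<bar> \<le> \<bar>lam\<bar> * bc_bound" "\<And>k. \<bar>snd (p k)\<bar> \<le> \<bar>lam\<bar> * bc_bound"
    "\<And>k. continuous_on {0..1} (x k)"
    "\<And>k t. t \<in> {0..1} \<Longrightarrow> picard lam (fst (p k)) (snd (p k)) (delay (h k) (x k)) t = x k t"
    "\<And>k. bc_map lam (drift (delay (h k) (x k))) = p k"
proof -
  define h where "h k = 1 / real (Suc k)" for k
  have h: "h k \<ge> 0" "1 \<le> real (Suc k) * h k" for k
    unfolding h_def by auto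
  have "h \<longlonglongrightarrow> 0"
    unfolding h_def using LIMSEQ_inverse_real_of_nat by (simp add: inverse_eq_divide)
  define X where "X k q = delayed_iterate lam (h k) (fst q) (snd q) (Suc k)" for k q
  have "\<exists>q. \<bar>fst q\<bar> \<le> \<bar>lam\<bar> * bc_bound \<and> \<bar>snd q\<bar> \<le> \<bar>lam\<bar> * bc_bound \<and>
      bc_map lam (drift (delay (h k) (X k q))) = q" for k
  proof -
    obtain c d where "\<bar>c\<bar> \<le> \<bar>lam\<bar> * bc_bound" "\<bar>d\<bar> \<le> \<bar>lam\<bar> * bc_bound"
      "bc_map lam (drift (delay (h k) (delayed_iterate lam (h k) c d (Suc k)))) = (c, d)"
      by (rule delayed_bc_fixed_point[OF h(1)])
    then show ?thesis unfolding X_def by (intro exI[of _ "(c, d)"]) simp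
  qed
  then obtain p where p: "\<And>k. \<bar>fst (p k)\<bar> \<le> \<bar>lam\<bar> * bc_bound \<and> \<bar>snd (p k)\<bar> \<le> \<bar>lam\<bar> * bc_bound \<and>
      bc_map lam (drift (delay (h k) (X k (p k)))) = p k"
    by metis
  show ?thesis
  proof (rule that[of h p "\<lambda>k. X k (p k)"])
    show "continuous_on {0..1} (X k (p k))" for k
      unfolding X_def by (rule continuous_on_delayed_iterate[OF h(1)])
    show "picard lam (fst (p k)) (snd (p k)) (delay (h k) (X k (p k))) t = X k (p k) t"
      if "t \<in> {0..1}" for k t
      unfolding X_def by (rule delayed_iterate_fixed_point[OF h(2) that])
  qed (use h \<open>h \<longlonglongrightarrow> 0\<close> p in auto)
qed

lemma integral_equation_solution:
  obtains c d g where "\<bar>c\<bar> \<le> \<bar>lam\<bar> * bc_bound" "\<bar>d\<bar> \<le> \<bar>lam\<bar> * bc_bound" "continuous_on {0..1} g"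
    "\<And>t. t \<in> {0..1} \<Longrightarrow> picard lam c d g t = g t" "bc_map lam (drift g) = (c, d)"
proof -
  define \<rho> where "\<rho> = \<bar>lam\<bar> * bc_bound"
  obtain h p x where h: "\<And>k. h k \<ge> 0" "h \<longlonglongrightarrow> 0"
    and p: "\<And>k. \<bar>fst (p k)\<bar> \<le> \<rho>" "\<And>k. \<bar>snd (p k)\<bar> \<le> \<rho>"
    and x: "\<And>k. continuous_on {0..1} (x k)"
    and fixed: "\<And>k t. t \<in> {0..1} \<Longrightarrow> picard lam (fst (p k)) (snd (p k)) (delay (h k) (x k)) t = x k t"
    and bc: "\<And>k. bc_map lam (drift (delay (h k) (x k))) = p k"
    using delayed_bc_solution_sequence[where lam=lam] unfolding \<rho>_def by blast
  have y: "continuous_on {0..1} (delay (h k) (x k))" for k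
    by (intro continuous_on_delay h x)
  have x_bound: "norm (x k t) \<le> 2 * \<rho> + \<bar>lam\<bar> * M" if "t \<in> {0..1}" for k t
    using abs_picard_le[OF y[of k] that, of lam "fst (p k)" "snd (p k)"] fixed[OF that, of k] p[of k]
    by simp
  have x_lip: "dist (x k s) (x k t) \<le> (\<rho> + \<bar>lam\<bar> * M) * dist s t"
    if "s \<in> {0..1}" "t \<in> {0..1}" for k s t
  proof -
    have "\<bar>x k s - x k t\<bar> \<le> (\<bar>snd (p k)\<bar> + \<bar>lam\<bar> * M) * \<bar>s - t\<bar>"
      using abs_picard_diff_le[OF y[of k] that, of lam "fst (p k)" "snd (p k)"] fixed[of s k] fixed[of t k] that
      by simp
    also have "\<dots> \<le> (\<rho> + \<bar>lam\<bar> * M) * \<bar>s - t\<bar>"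
      using p(2)[of k] by (intro mult_right_mono) auto
    finally show ?thesis by (simp add: dist_real_def)
  qed
  have p_in: "p k \<in> {-\<rho>..\<rho>} \<times> {-\<rho>..\<rho>}" for k
    using p[of k] unfolding mem_Times_iff atLeastAtMost_iff abs_le_iff by (meson minus_le_iff)
  obtain r q g where r: "strict_mono r" and q: "q \<in> {-\<rho>..\<rho>} \<times> {-\<rho>..\<rho>}" "(p \<circ> r) \<longlonglongrightarrow> q"
    and g: "continuous_on {0..1} g" "uniform_limit {0..1} (x \<circ> r) g sequentially"
  proof (rule Arzela_Ascoli_lipschitz_parameters[where p=p and x=x and S="{0..1}"
        and K="{-\<rho>..\<rho>} \<times> {-\<rho>..\<rho>}" and B="2 * \<rho> + \<bar>lam\<bar> * M" and L="\<rho> + \<bar>lam\<bar> * M"])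
    show "compact ({-\<rho>..\<rho>} \<times> {-\<rho>..\<rho>})" by (intro compact_Times compact_Icc)
    show "p k \<in> {-\<rho>..\<rho>} \<times> {-\<rho>..\<rho>}" for k by (rule p_in)
    show "compact {0..1::real}" by (rule compact_Icc)
    show "norm (x k t) \<le> 2 * \<rho> + \<bar>lam\<bar> * M" if "t \<in> {0..1}" for k t
      using x_bound[OF that] .
    show "dist (x k s) (x k t) \<le> (\<rho> + \<bar>lam\<bar> * M) * dist s t" if "s \<in> {0..1}" "t \<in> {0..1}" for k s t
      using x_lip[OF that] .
  qed (rule that)
  have "(h \<circ> r) \<longlonglongrightarrow> 0"
    by (rule LIMSEQ_subseq_LIMSEQ[OF h(2) r])
  then have "\<And>t. t \<in> {0..1} \<Longrightarrow> picard lam (fst q) (snd q) g t = g t"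
    and "bc_map lam (drift g) = (fst q, snd q)"
    using limit_of_delayed_bc_solutions[of "h \<circ> r" "p \<circ> r" "fst q" "snd q" "x \<circ> r" g lam]
      h x fixed bc g q(2) by simp_all
  moreover have "\<bar>fst q\<bar> \<le> \<rho>" "\<bar>snd q\<bar> \<le> \<rho>"
    using q(1) unfolding mem_Times_iff atLeastAtMost_iff abs_le_iff by linarith+
  ultimately show ?thesis
    using that g(1) unfolding \<rho>_def by blast
qed

lemma solution_exists:
  assumes "tagged_oscillation_vanishes A 0 1" "tagged_oscillation_vanishes B 0 1"
  obtains x where "is_solution F lam A B x" "\<And>t. t \<in> {0..1} \<Longrightarrow> \<bar>x t\<bar> \<le> \<bar>lam\<bar> * (2 * bc_bound + M)"
proof -
  obtain c d g where c: "\<bar>c\<bar> \<le> \<bar>lam\<bar> * bc_bound" and d: "\<bar>d\<bar> \<le> \<bar>lam\<bar> * bc_bound"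
    and g: "continuous_on {0..1} g" and fixed: "\<And>t. t \<in> {0..1} \<Longrightarrow> picard lam c d g t = g t"
    and bc: "bc_map lam (drift g) = (c, d)"
    using integral_equation_solution[where lam=lam] by blast
  define x where "x = picard lam c d g"
  define x' where "x' t = d + lam * drift g t" for t
  have x: "(x has_real_derivative x' t) (at t within {0..1})" if "t \<in> {0..1}" for t
    unfolding x_def x'_def by (rule has_real_derivative_picard[OF g that])
  have x': "(x' has_real_derivative - lam * F t (x t)) (at t within {0..1})" if "t \<in> {0..1}" for t
  proof -
    have "(x' has_real_derivative 0 + lam * - F t (g t)) (at t within {0..1})"
      unfolding x'_def[abs_def] by (intro DERIV_add DERIV_const DERIV_cmult has_real_derivative_drift g that)
    then show ?thesis using fixed[OF that] unfolding x_def by simp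
  qed
  have x_cont: "continuous_on {0..1} x"
    unfolding x_def by (rule continuous_on_picard[OF g])
  have x'_cont: "continuous_on {0..1} x'"
    unfolding x'_def[abs_def] by (intro continuous_intros continuous_on_drift g)
  have RS_A: "has_RS_integral A x 0 1 (x 0)"
    using has_RS_integral_derivative[OF A_bounded A_integrable assms(1) x x'_cont]
      bc_map_boundary_conditions(1)[OF bc continuous_on_drift[OF g]]
    unfolding x_def x'_def by simp
  have RS_B: "has_RS_integral B x 0 1 (x 1)"
    using has_RS_integral_derivative[OF B_bounded B_integrable assms(2) x x'_cont]
      bc_map_boundary_conditions(2)[OF bc continuous_on_drift[OF g]]
    unfolding x_def x'_def by (simp add: picard_def)
  have "continuous_on {0..1} (\<lambda>t. - lam * F t (x t))"
    by (rule continuous_on_mult_left[OF continuous_along[OF x_cont]])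
  then have "is_solution F lam A B x"
    unfolding is_solution_def
    by (intro conjI exI[of _ x'] exI[of _ "\<lambda>t. - lam * F t (x t)"] ballI x x' RS_A RS_B refl)
  moreover have "\<bar>x t\<bar> \<le> \<bar>lam\<bar> * (2 * bc_bound + M)" if "t \<in> {0..1}" for t
    using abs_picard_le[OF g that, of lam c d] c d unfolding x_def by (simp add: algebra_simps)
  ultimately show ?thesis by (rule that)
qed

end

lemma bvp_if_Omega_hat01:
  assumes "bounded_rhs F M" "Omega_hat01 A" "Omega_hat01 B"
    and "\<bar>integral {0..1} (\<lambda>s. A s - B s)\<bar> < 1"
  obtains M\<^sub>A M\<^sub>B where "bvp F M A B M\<^sub>A M\<^sub>B"
proof -
  obtain M\<^sub>A M\<^sub>B where "\<And>s. s \<in> {0..1} \<Longrightarrow> \<bar>A s\<bar> \<le> M\<^sub>A" "\<And>s. s \<in> {0..1} \<Longrightarrow> \<bar>B s\<bar> \<le> M\<^sub>B"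
    using Omega_hat01_imp_bounded[OF assms(2)] Omega_hat01_imp_bounded[OF assms(3)]
    unfolding bounded_iff by (metis image_eqI real_norm_def)
  moreover note integrable = assms(2,3)[THEN Omega_hat01_integrable]
  moreover have "0 < 1 + integral {0..1} A - integral {0..1} B"
    using assms(4) Henstock_Kurzweil_Integration.integral_diff[OF integrable]
    by (simp add: abs_less_iff)
  ultimately have "bvp F M A B M\<^sub>A M\<^sub>B"
    using assms(1) by (simp add: bvp_def bvp_axioms_def)
  then show ?thesis by (rule that)
qed

theorem theorem4p16:
  fixes f :: "real \<Rightarrow> real \<Rightarrow> real" and A B :: "real \<Rightarrow> real"
  assumes "continuous_on ({0..1} \<times> UNIV) (\<lambda>(t, y). f t y)"
    and "Omega_hat01 A" and "Omega_hat01 B"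
    and "\<bar>integral {0..1} (\<lambda>s. A s - B s)\<bar> < 1"
  shows "\<exists>lam0>0. \<forall>lam::real. \<bar>lam\<bar> \<le> lam0 \<longrightarrow> (\<exists>x. is_solution f lam A B x)"
proof -
  define F where "F t y = f t (clamp 1 y)" for t y :: real
  obtain M where "bounded_rhs F M"
    using bounded_rhs_truncation[OF assms(1), where R=1] unfolding F_def by blast
  then obtain M\<^sub>A M\<^sub>B where "bvp F M A B M\<^sub>A M\<^sub>B"
    using bvp_if_Omega_hat01 assms(2-4) by blast
  then interpret bvp F M A B M\<^sub>A M\<^sub>B .
  define lam0 where "lam0 = 1 / (2 * bc_bound + M + 1)"
  show ?thesis
  proof (intro exI[of _ lam0] conjI allI impI)
    show "lam0 > 0" unfolding lam0_def using bc_bound_nonneg bound_nonneg by simp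
    fix lam :: real assume "\<bar>lam\<bar> \<le> lam0"
    obtain x where x: "is_solution F lam A B x"
      and x_bound: "\<And>t. t \<in> {0..1} \<Longrightarrow> \<bar>x t\<bar> \<le> \<bar>lam\<bar> * (2 * bc_bound + M)"
      using solution_exists[where lam=lam] assms(2,3)[THEN Omega_hat01_imp_tagged_oscillation_vanishes]
      by blast
    have "\<bar>lam\<bar> * (2 * bc_bound + M) \<le> lam0 * (2 * bc_bound + M + 1)"
      using \<open>\<bar>lam\<bar> \<le> lam0\<close> bc_bound_nonneg bound_nonneg by (intro mult_mono) auto
    also have "\<dots> = 1" unfolding lam0_def using bc_bound_nonneg bound_nonneg by simp
    finally have "F t (x t) = f t (x t)" if "t \<in> {0..1}" for t
      using x_bound[OF that] unfolding F_def by (simp add: clamp_eq_self)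
    with x show "\<exists>x. is_solution f lam A B x"
      using is_solution_cong by blast
  qed
qed

end
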